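(* Let $q\in U(1)$, and let $A(DT^2_q)$, $A(Z_2)=\mathrm{span}\{z,1-z\}$, $A(T^2)=\mathbb{C}[u^{\pm1},v^{\pm1}]$ be as defined below. Let $\sigma:A(T^2)\otimes A(T^2)\to A(Z_2)$ be the linear map $\sigma=(\varepsilon\otimes\varepsilon)z+\sigma_q(1-z)$ with $\sigma_q(u^kv^l\otimes u^mv^n)$ given by $q^{-2kn}$ ($k>l,m>n$); $q^{-m(2k+m)}$ ($k>l,m=n$); $q^{-2n(k+m)}$ ($k>l,m<n,k+m>l+n$); $q^{(k+m)(2l-k-m)}$ ($k>l,m<n,k+m=l+n$); $q^{2l(k+m)}$ ($k>l,m<n,k+m<l+n$); $q^{-k(k+2n)}$ ($k=l,m>n$); $1$ ($k=l,m=n$); $q^{k(k+2m)}$ ($k=l,m<n$); $q^{-2k(l+n)}$ ($k<l,m>n,k+m>l+n$); $q^{(l+n)(l+n-2k)}$ ($k<l,m>n,k+m=l+n$); $q^{2m(l+n)}$ ($k<l,m>n,k+m<l+n$); $q^{m(m+2l)}$ ($k<l,m=n$); $q^{2lm}$ ($k<l,m<n$). Let $\lambda:A(T^2)\to A(T^2)\otimes A(Z_2)$ be the $*$-algebra homomorphism $\lambda(u^mv^n)=u^mv^n\otimes z+u^nv^m\otimes(1-z)$, written $\lambda(h)=h^{(0)}\otimes h^{(1)}$. Let $A(Z_2)^{\lambda}\#_\sigma A(T^2)$ denote the vector space $A(Z_2)\otimes A(T^2)$ with multiplication $(x\otimes h)(y\otimes g)=xy\,\sigma(h_{(1)}\otimes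 g_{(1)})\otimes h_{(2)}g_{(2)}$ and comultiplication $\Delta(x\otimes h)=(x_{(1)}\otimes h_{(1)}{}^{(0)})\otimes(x_{(2)}h_{(1)}{}^{(1)}\otimes h_{(2)})$ (Sweedler notation). Then $A(DT^2_q)$ is isomorphic as a Hopf algebra to the bicross-product $A(Z_2)^{\lambda}\#_\sigma A(T^2)$.
   Context: Let $q\in U(1)$. $A(U_{q^{-1},q}(2))$ is the complex $*$-Hopf algebra generated by $a,b,c,d,D^{-1}$, where $D:=ad-q^{-1}bc$, with relations $ab=q^{-1}ba$, $cd=q^{-1}dc$, $ac=qca$, $bd=qdb$, $ad=da$, $bc=q^2cb$, $DD^{-1}=D^{-1}D=1$; coproduct $\Delta(a)=a\otimes a+b\otimes c$, $\Delta(b)=a\otimes b+b\otimes d$, $\Delta(c)=c\otimes a+d\otimes c$, $\Delta(d)=c\otimes b+d\otimes d$; counit $\varepsilon(a)=\varepsilon(d)=1$, $\varepsilon(b)=\varepsilon(c)=0$; involution $a^*=S(a)$, $b^*=S(c)$, $c^*=S(b)$, $d^*=S(d)$ with $S$ the antipode. $A(DT^2_q)$ is the quotient of $A(U_{q^{-1},q}(2))$ by the Hopf ideal generated by $ab,ac,cd,bd$; images keep their names, and $z:=D^{-1}ad$ is a central idempotent. $A(Z_2)$ is the Hopf algebra of functions on $Z_2=\{0,1\}$, identified with $\mathrm{span}\{z,1-z\}\subset A(DT^2_q)$ via $f\mapsto z$ where $f(0)=1,f(1)=0$ (so $z$ and $1-z$ are the delta functions at $0$ and $1$). $A(T^2)=\mathbb{C}[u^{\pm1},v^{\pm1}]$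 is the Hopf algebra of polynomial functions on the 2-torus with $u,v$ group-like unitaries; $\varepsilon$ denotes its counit. *)

theory Defs
  imports Complex_Main "HOL-Library.Poly_Mapping"
begin

text \<open>The free complex algebra on generators of type 'g: finitely supported
  complex functions on words.\<close>
type_synonym 'g free_alg = "'g list \<Rightarrow>\<^sub>0 complex"
type_synonym 'g free_alg2 = "('g list \<times> 'g list) \<Rightarrow>\<^sub>0 complex"

definition fmul :: "'g free_alg \<Rightarrow> 'g free_alg \<Rightarrow> 'g free_alg" where
  "fmul p r = (\<Sum>v\<in>Poly_Mapping.keys p. \<Sum>w\<in>Poly_Mapping.keys r.
      Poly_Mapping.single (v @ w) (Poly_Mapping.lookup p v * Poly_Mapping.lookup r w))"

definition fscal :: "complex \<Rightarrow> 'g free_alg" where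
  "fscal c = Poly_Mapping.single [] c"

definition fgen :: "'g \<Rightarrow> 'g free_alg" where
  "fgen g = Poly_Mapping.single [g] 1"

inductive_set gen_ideal :: "'g free_alg set \<Rightarrow> 'g free_alg set" for R where
  gen: "r \<in> R \<Longrightarrow> r \<in> gen_ideal R"
| zero: "0 \<in> gen_ideal R"
| add: "a \<in> gen_ideal R \<Longrightarrow> b \<in> gen_ideal R \<Longrightarrow> a + b \<in> gen_ideal R"
| lmul: "a \<in> gen_ideal R \<Longrightarrow> fmul x a \<in> gen_ideal R"
| rmul: "a \<in> gen_ideal R \<Longrightarrow> fmul a x \<in> gen_ideal R"

definition ftensor :: "'g free_alg \<Rightarrow> 'g free_alg \<Rightarrow> 'g free_alg2" where
  "ftensor p r = (\<Sum>v\<in>Poly_Mapping.keys p. \<Sum>w\<in>Poly_Mapping.keys r.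
      Poly_Mapping.single (v, w) (Poly_Mapping.lookup p v * Poly_Mapping.lookup r w))"

definition fmul2 :: "'g free_alg2 \<Rightarrow> 'g free_alg2 \<Rightarrow> 'g free_alg2" where
  "fmul2 s t = (\<Sum>x\<in>Poly_Mapping.keys s. \<Sum>y\<in>Poly_Mapping.keys t.
      Poly_Mapping.single (fst x @ fst y, snd x @ snd y) (Poly_Mapping.lookup s x * Poly_Mapping.lookup t y))"

text \<open>The subspace I \<otimes> F + F \<otimes> I of F \<otimes> F (kernel of F\<otimes>F \<rightarrow> F/I \<otimes> F/I).\<close>
inductive_set tens_ker :: "'g free_alg set \<Rightarrow> 'g free_alg2 set" for I where
  zero: "0 \<in> tens_ker I"
| left: "p \<in> I \<Longrightarrow> ftensor p w \<in> tens_ker I"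
| right: "p \<in> I \<Longrightarrow> ftensor w p \<in> tens_ker I"
| add: "a \<in> tens_ker I \<Longrightarrow> b \<in> tens_ker I \<Longrightarrow> a + b \<in> tens_ker I"

fun delta_word :: "('g \<Rightarrow> 'g free_alg2) \<Rightarrow> 'g list \<Rightarrow> 'g free_alg2" where
  "delta_word dg [] = Poly_Mapping.single ([], []) 1"
| "delta_word dg (g # w) = fmul2 (dg g) (delta_word dg w)"

definition fdelta :: "('g \<Rightarrow> 'g free_alg2) \<Rightarrow> 'g free_alg \<Rightarrow> 'g free_alg2" where
  "fdelta dg p = (\<Sum>w\<in>Poly_Mapping.keys p. fmul2 (Poly_Mapping.single ([], []) (Poly_Mapping.lookup p w)) (delta_word dg w))"

definition fcounit :: "('g \<Rightarrow> complex) \<Rightarrow> 'g free_alg \<Rightarrow> complex" where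
  "fcounit eg p = (\<Sum>w\<in>Poly_Mapping.keys p. Poly_Mapping.lookup p w * (\<Prod>i<length w. eg (w ! i)))"

section \<open>The Hopf algebra A(DT^2_q) by generators and relations\<close>

datatype gen = Ga | Gb | Gc | Gd | GDi  \<comment> \<open>a, b, c, d, D^{-1}\<close>

definition gA :: "gen free_alg" where "gA = fgen Ga"
definition gB :: "gen free_alg" where "gB = fgen Gb"
definition gC :: "gen free_alg" where "gC = fgen Gc"
definition gD :: "gen free_alg" where "gD = fgen Gd"
definition gDi :: "gen free_alg" where "gDi = fgen GDi"

definition detq :: "complex \<Rightarrow> gen free_alg" where
  "detq q = fmul gA gD - fmul (fscal (inverse q)) (fmul gB gC)"

text \<open>Defining relations of A(U_{q^{-1},q}(2)) (as elements r meaning r = 0).\<close>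
definition rels_U :: "complex \<Rightarrow> gen free_alg set" where
  "rels_U q = {
     fmul gA gB - fmul (fscal (inverse q)) (fmul gB gA),
     fmul gC gD - fmul (fscal (inverse q)) (fmul gD gC),
     fmul gA gC - fmul (fscal q) (fmul gC gA),
     fmul gB gD - fmul (fscal q) (fmul gD gB),
     fmul gA gD - fmul gD gA,
     fmul gB gC - fmul (fscal (q^2)) (fmul gC gB),
     fmul (detq q) gDi - fscal 1,
     fmul gDi (detq q) - fscal 1 }"

definition rels_DT :: "complex \<Rightarrow> gen free_alg set" where
  "rels_DT q = rels_U q \<union> {fmul gA gB, fmul gA gC, fmul gC gD, fmul gB gD}"

definition ideal_DT :: "complex \<Rightarrow> gen free_alg set" where
  "ideal_DT q = gen_ideal (rels_DT q)"

text \<open>Coproduct and counit on generators (D is group-like, so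
  Delta(D^{-1}) = D^{-1} \<otimes> D^{-1}, eps(D^{-1}) = 1).\<close>
fun delta_gen :: "gen \<Rightarrow> gen free_alg2" where
  "delta_gen Ga = ftensor gA gA + ftensor gB gC"
| "delta_gen Gb = ftensor gA gB + ftensor gB gD"
| "delta_gen Gc = ftensor gC gA + ftensor gD gC"
| "delta_gen Gd = ftensor gC gB + ftensor gD gD"
| "delta_gen GDi = ftensor gDi gDi"

fun eps_gen :: "gen \<Rightarrow> complex" where
  "eps_gen Ga = 1" | "eps_gen Gb = 0" | "eps_gen Gc = 0" | "eps_gen Gd = 1"
| "eps_gen GDi = 1"

section \<open>The bicrossproduct A(Z_2) {}^\<lambda>#_\<sigma> A(T^2)\<close>

text \<open>Z_2 = {0,1}; Z0, Z1 stand for 0, 1. A(Z_2) has basis of delta functions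
  delta_Z0 = z, delta_Z1 = 1 - z; A(T^2) has basis u^k v^l, indexed by (k,l).
  Hence A(Z_2) \<otimes> A(T^2) is the free vector space on z2 \<times> int \<times> int.\<close>
datatype z2 = Z0 | Z1

fun z2_add :: "z2 \<Rightarrow> z2 \<Rightarrow> z2" where
  "z2_add Z0 x = x" | "z2_add Z1 Z0 = Z1" | "z2_add Z1 Z1 = Z0"

type_synonym bcp = "(z2 \<times> int \<times> int) \<Rightarrow>\<^sub>0 complex"
type_synonym bcp2 = "((z2 \<times> int \<times> int) \<times> (z2 \<times> int \<times> int)) \<Rightarrow>\<^sub>0 complex"

definition sigma_q :: "complex \<Rightarrow> int \<Rightarrow> int \<Rightarrow> int \<Rightarrow> int \<Rightarrow> complex" where
  "sigma_q q k l m n =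
    (if k > l then
       (if m > n then q powi (-2*k*n)
        else if m = n then q powi (-m*(2*k+m))
        else if k + m > l + n then q powi (-2*n*(k+m))
        else if k + m = l + n then q powi ((k+m)*(2*l-k-m))
        else q powi (2*l*(k+m)))
     else if k = l then
       (if m > n then q powi (-k*(k+2*n))
        else if m = n then 1
        else q powi (k*(k+2*m)))
     else
       (if m > n then
          (if k + m > l + n then q powi (-2*k*(l+n))
           else if k + m = l + n then q powi ((l+n)*(l+n-2*k))
           else q powi (2*m*(l+n)))
        else if m = n then q powi (m*(m+2*l))
        else q powi (2*l*m)))"

text \<open>sigma = (eps \<otimes> eps) z + sigma_q (1 - z) on basis elements, as a function
  on Z_2 (element of A(Z_2)); eps(u^k v^l) = 1.\<close>
definition sigma :: "complex \<Rightarrow> int \<times> int \<Rightarrow> int \<times> int \<Rightarrow> z2 \<Rightarrow> complex" where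
  "sigma q h g e = (case (h, g) of ((k, l), (m, n)) \<Rightarrow>
     (if e = Z0 then 1 * 1 else sigma_q q k l m n))"

definition zdelta :: "z2 \<Rightarrow> z2 \<Rightarrow> complex" where
  "zdelta i e = (if e = i then 1 else 0)"

text \<open>lambda(u^m v^n) = u^m v^n \<otimes> z + u^n v^m \<otimes> (1 - z) = \<Sum>_e lam e (m,n) \<otimes> delta_e\<close>
fun lam :: "z2 \<Rightarrow> int \<times> int \<Rightarrow> int \<times> int" where
  "lam Z0 (m, n) = (m, n)" | "lam Z1 (m, n) = (n, m)"

text \<open>Multiplication (x \<otimes> h)(y \<otimes> g) = x y sigma(h_(1) \<otimes> g_(1)) \<otimes> h_(2) g_(2),
  extended bilinearly from basis elements delta_i \<otimes> u^k v^l (group-like, so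
  h_(1) \<otimes> h_(2) = h \<otimes> h); the A(Z_2)-factor is expanded in the delta basis.\<close>
definition bcp_mul :: "complex \<Rightarrow> bcp \<Rightarrow> bcp \<Rightarrow> bcp" where
  "bcp_mul q x y = (\<Sum>a\<in>Poly_Mapping.keys x. \<Sum>b\<in>Poly_Mapping.keys y. case (a, b) of ((i, h), (j, g)) \<Rightarrow>
     (\<Sum>e\<in>{Z0, Z1}. Poly_Mapping.single (e, (fst h + fst g, snd h + snd g))
        (Poly_Mapping.lookup x a * Poly_Mapping.lookup y b * (zdelta i e * zdelta j e * sigma q h g e))))"

text \<open>Unit 1 \<otimes> 1 = (delta_Z0 + delta_Z1) \<otimes> u^0 v^0.\<close>
definition bcp_one :: bcp where
  "bcp_one = Poly_Mapping.single (Z0, (0, 0)) 1 + Poly_Mapping.single (Z1, (0, 0)) 1"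

text \<open>Comultiplication Delta(x \<otimes> h) = (x_(1) \<otimes> h_(1)^(0)) \<otimes> (x_(2) h_(1)^(1) \<otimes> h_(2)),
  with Delta(delta_i) = \<Sum>_{i1 + i2 = i} delta_i1 \<otimes> delta_i2 and
  lambda(h) = \<Sum>_e lam e h \<otimes> delta_e.\<close>
definition bcp_delta :: "bcp \<Rightarrow> bcp2" where
  "bcp_delta x = (\<Sum>a\<in>Poly_Mapping.keys x. case a of (i, h) \<Rightarrow>
     (\<Sum>i1\<in>{Z0, Z1}. \<Sum>i2\<in>{Z0, Z1}. \<Sum>e\<in>{Z0, Z1}. \<Sum>e'\<in>{Z0, Z1}.
        if z2_add i1 i2 = i then
          Poly_Mapping.single ((i1, lam e h), (e', h))
            (Poly_Mapping.lookup x a * (zdelta i2 e' * zdelta e e'))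
        else 0))"

definition bcp_counit :: "bcp \<Rightarrow> complex" where
  "bcp_counit x = (\<Sum>a\<in>Poly_Mapping.keys x. case a of (i, h) \<Rightarrow> Poly_Mapping.lookup x a * zdelta i Z0 * 1)"

definition lin_ext :: "((z2 \<times> int \<times> int) \<Rightarrow> 'g free_alg) \<Rightarrow> bcp \<Rightarrow> 'g free_alg" where
  "lin_ext f x = (\<Sum>a\<in>Poly_Mapping.keys x. fmul (fscal (Poly_Mapping.lookup x a)) (f a))"

definition lin_ext2 :: "((z2 \<times> int \<times> int) \<Rightarrow> 'g free_alg) \<Rightarrow> bcp2 \<Rightarrow> 'g free_alg2" where
  "lin_ext2 f t = (\<Sum>a\<in>Poly_Mapping.keys t.
      fmul2 (Poly_Mapping.single ([], []) (Poly_Mapping.lookup t a)) (ftensor (f (fst a)) (f (snd a))))"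

text \<open>Hopf algebra isomorphism (bialgebra isomorphism; the antipode is then
  automatically preserved) from the bicrossproduct onto A(DT^2_q) = F/I, given by a
  linear map Phi : bicrossproduct \<rightarrow> F composed with the quotient map F \<rightarrow> F/I.\<close>
definition hopf_iso_DT :: "complex \<Rightarrow> ((z2 \<times> int \<times> int) \<Rightarrow> gen free_alg) \<Rightarrow> bool" where
  "hopf_iso_DT q f \<longleftrightarrow>
     (let I = ideal_DT q; \<Phi> = lin_ext f in
       (\<forall>p. \<exists>x. p - \<Phi> x \<in> I) \<and>
       (\<forall>x. \<Phi> x \<in> I \<longrightarrow> x = 0) \<and>
       (\<forall>x y. \<Phi> (bcp_mul q x y) - fmul (\<Phi> x) (\<Phi> y) \<in> I) \<and>
       \<Phi> bcp_one - fscal 1 \<in> I \<and>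
       (\<forall>x. fdelta delta_gen (\<Phi> x) - lin_ext2 f (bcp_delta x) \<in> tens_ker I) \<and>
       (\<forall>x. fcounit eps_gen (\<Phi> x) = bcp_counit x))"

end

(* In A(DT^2_q) the element z = D^{-1}ad is a central idempotent with 1 - z = -q^{-1} D^{-1}bc, and
   the relations ab = ac = cd = bd = 0 make a, d invertible in the corner z and c, b invertible in
   the corner 1 - z, so that the monomials z a^k d^l and D^{-1}bc c^k b^l (k, l integers) span the
   algebra.  The cocycle sigma_q is cohomologous to the bicharacter q^{2lm}; hence the bicrossproduct
   is associative and the generators extend to an algebra map psi from the free algebra into it,
   which kills the defining ideal.  The linear map Phi sending delta_i (x) u^k v^l to a suitably
   rescaled monomial satisfies p Phi(x) = Phi(psi(p) x) modulo the ideal; thus psi Phi = id, and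
   Phi is bijective and multiplicative modulo the ideal.  Counit and coproduct are compared on the
   monomials, the coproduct after splitting each tensor leg along z and 1 - z. *)

theory Submission
  imports Defs "HOL-Library.Product_Plus"
begin

section \<open>Free algebras as monoid rings\<close>

text \<open>With concatenation as addition, words form a monoid, so that the free algebra is the
  monoid ring of Poly_Mapping and fmul, fmul2 are its products.\<close>

instantiation list :: (type) monoid_add
begin
definition zero_list_def: "(0::'a list) = []"
definition plus_list_def: "(xs::'a list) + ys = xs @ ys"
instance by standard (simp_all add: zero_list_def plus_list_def)
end

definition pm_sum :: "('a \<Rightarrow> 'c::zero \<Rightarrow> 'b::comm_monoid_add) \<Rightarrow> ('a \<Rightarrow>\<^sub>0 'c) \<Rightarrow> 'b" where
  "pm_sum g x = (\<Sum>a\<in>Poly_Mapping.keys x. g a (Poly_Mapping.lookup x a))"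

lemma pm_sum_superset:
  assumes "finite S" "Poly_Mapping.keys x \<subseteq> S" "\<And>a. g a 0 = 0"
  shows "pm_sum g x = (\<Sum>a\<in>S. g a (Poly_Mapping.lookup x a))"
  unfolding pm_sum_def
  by (rule sum.mono_neutral_left) (use assms in \<open>auto simp: in_keys_iff\<close>)

lemma pm_sum_add:
  fixes g :: "'a \<Rightarrow> 'c::monoid_add \<Rightarrow> 'b::comm_monoid_add"
  assumes "\<And>a. g a 0 = 0" "\<And>a c d. g a (c + d) = g a c + g a d"
  shows "pm_sum g (x + y) = pm_sum g x + pm_sum g y"
proof -
  let ?S = "Poly_Mapping.keys x \<union> Poly_Mapping.keys y"
  have "Poly_Mapping.keys (x + y) \<subseteq> ?S"
    by (auto simp: in_keys_iff lookup_add)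
  then show ?thesis
    using pm_sum_superset[of ?S "x + y" g] pm_sum_superset[of ?S x g] pm_sum_superset[of ?S y g] assms
    by (simp add: lookup_add sum.distrib)
qed

lemma pm_sum_single: "(\<And>a. g a 0 = 0) \<Longrightarrow> pm_sum g (Poly_Mapping.single a c) = g a c"
  using pm_sum_superset[of "{a}" "Poly_Mapping.single a c" g] by simp

lemma pm_sum_zero [simp]: "pm_sum g 0 = 0"
  by (simp add: pm_sum_def)

lemma pm_sum_plus_fun: "pm_sum (\<lambda>a c. g a c + h a c) x = pm_sum g x + pm_sum h x"
  by (simp add: pm_sum_def sum.distrib)

lemma poly_mapping_sum_singles:
  "x = (\<Sum>a\<in>Poly_Mapping.keys x. Poly_Mapping.single a (Poly_Mapping.lookup x a))"
  by (rule poly_mapping_eqI) (simp add: lookup_sum lookup_single when_def in_keys_iff)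

lemma poly_mapping_induct [case_names zero single add]:
  fixes x :: "'a \<Rightarrow>\<^sub>0 'b::comm_monoid_add"
  assumes "P 0" "\<And>a c. P (Poly_Mapping.single a c)" "\<And>x y. P x \<Longrightarrow> P y \<Longrightarrow> P (x + y)"
  shows "P x"
proof -
  have "P (\<Sum>a\<in>S. Poly_Mapping.single a (Poly_Mapping.lookup x a))" if "finite S" for S
    using that by (induction S rule: finite_induct) (use assms in auto)
  then show ?thesis by (subst poly_mapping_sum_singles) simp
qed

lemma poly_mapping_induct_triple [case_names zero single add]:
  fixes x :: "('i \<times> 'j \<times> 'k) \<Rightarrow>\<^sub>0 'b::comm_monoid_add"
  assumes "P 0" "\<And>i k l c. P (Poly_Mapping.single (i, k, l) c)" "\<And>x y. P x \<Longrightarrow> P y \<Longrightarrow> P (x + y)"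
  shows "P x"
  using assms by (induction x rule: poly_mapping_induct) auto

lemma fmul_eq_times: "fmul p r = p * r"
proof -
  have "p * r = (\<Sum>v\<in>Poly_Mapping.keys p. Poly_Mapping.single v (Poly_Mapping.lookup p v)) *
      (\<Sum>w\<in>Poly_Mapping.keys r. Poly_Mapping.single w (Poly_Mapping.lookup r w))"
    by (metis poly_mapping_sum_singles)
  also have "\<dots> = fmul p r"
    by (simp add: fmul_def sum_distrib_left sum_distrib_right mult_single plus_list_def)
       (rule sum.swap)
  finally show ?thesis by simp
qed

lemma fmul2_eq_times: "fmul2 p r = p * r"
proof -
  have "p * r = (\<Sum>v\<in>Poly_Mapping.keys p. Poly_Mapping.single v (Poly_Mapping.lookup p v)) *
      (\<Sum>w\<in>Poly_Mapping.keys r. Poly_Mapping.single w (Poly_Mapping.lookup r w))"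
    by (metis poly_mapping_sum_singles)
  also have "\<dots> = fmul2 p r"
    by (simp add: fmul2_def sum_distrib_left sum_distrib_right mult_single plus_list_def plus_prod_def)
       (rule sum.swap)
  finally show ?thesis by simp
qed

lemma single_zero_commute:
  fixes x :: "'a::monoid_add \<Rightarrow>\<^sub>0 'b::comm_semiring_1"
  shows "Poly_Mapping.single 0 c * x = x * Poly_Mapping.single 0 c"
proof (induction x rule: poly_mapping_induct)
  case (single a d) then show ?case by (simp add: mult_single mult.commute)
qed (simp_all add: distrib_left distrib_right)

lemma single_zero_mult:
  "Poly_Mapping.single (0::'a::monoid_add) (c::'b::semiring_0) * Poly_Mapping.single 0 d
   = Poly_Mapping.single 0 (c * d)"
  by (simp add: mult_single)

lemma fscal_eq_single: "fscal c = Poly_Mapping.single 0 c"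
  by (simp add: fscal_def zero_list_def)

lemma fgen_mult_single: "fgen g * Poly_Mapping.single w c = Poly_Mapping.single (g # w) c"
  by (simp add: fgen_def mult_single plus_list_def)

lemma single_word_eq_foldr: "Poly_Mapping.single w (1::complex) = foldr (\<lambda>g p. fgen g * p) w 1"
proof (induction w)
  case Nil then show ?case by (metis foldr_Nil id_apply single_one zero_list_def)
qed (simp add: fgen_mult_single[symmetric])

lemma ftensor_pm_sum:
  "ftensor p r = pm_sum (\<lambda>v a. pm_sum (\<lambda>w b. Poly_Mapping.single (v, w) (a * b)) r) p"
  by (simp add: ftensor_def pm_sum_def)

lemma ftensor_add_left: "ftensor (x + y) r = ftensor x r + ftensor y r"
  unfolding ftensor_pm_sum
  by (rule pm_sum_add) (simp_all add: pm_sum_def distrib_right single_add sum.distrib)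

lemma ftensor_add_right: "ftensor p (x + y) = ftensor p x + ftensor p y"
proof -
  have h: "pm_sum (\<lambda>w b. Poly_Mapping.single (v, w) (a * b)) (x + y) =
     pm_sum (\<lambda>w b. Poly_Mapping.single (v, w) (a * b)) x + pm_sum (\<lambda>w b. Poly_Mapping.single (v, w) (a * b)) y"
    for v a by (rule pm_sum_add) (simp_all add: distrib_left single_add)
  show ?thesis unfolding ftensor_pm_sum by (simp only: h pm_sum_plus_fun)
qed

lemma ftensor_zero_left [simp]: "ftensor 0 r = 0"
  and ftensor_zero_right [simp]: "ftensor p 0 = 0"
  by (simp_all add: ftensor_def)

interpretation ftensor_left: additive "\<lambda>p. ftensor p r" for r
  by unfold_locales (rule ftensor_add_left)

interpretation ftensor_right: additive "\<lambda>r. ftensor p r" for p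
  by unfold_locales (rule ftensor_add_right)

lemma ftensor_single:
  "ftensor (Poly_Mapping.single v a) (Poly_Mapping.single w b) = Poly_Mapping.single (v, w) (a * b)"
  unfolding ftensor_pm_sum by (simp add: pm_sum_single)

lemma ftensor_mult: "ftensor x y * ftensor x' y' = ftensor (x * x') (y * y')"
proof (induction x rule: poly_mapping_induct)
  case (single v a)
  show ?case
  proof (induction y rule: poly_mapping_induct)
    case (single w b)
    show ?case
    proof (induction x' rule: poly_mapping_induct)
      case (single v' a')
      show ?case
      proof (induction y' rule: poly_mapping_induct)
        case (single w' b')
        show ?case by (simp add: ftensor_single mult_single plus_prod_def mult_ac)
      qed (simp_all add: ftensor_add_right distrib_left)
    qed (simp_all add: ftensor_add_left distrib_left distrib_right)
  qed (simp_all add: ftensor_add_right distrib_left distrib_right)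
qed (simp_all add: ftensor_add_left distrib_left distrib_right)

lemma ftensor_single_zero:
  "ftensor (Poly_Mapping.single 0 a) (Poly_Mapping.single 0 b) = Poly_Mapping.single 0 (a * b)"
  using ftensor_single[of 0 a 0 b] by (simp only: zero_prod_def[symmetric])

lemma ftensor_one: "ftensor 1 1 = 1"
  using ftensor_single_zero[of 1 1] by simp

lemma ftensor_scalar_left: "ftensor (Poly_Mapping.single 0 c * x) y = Poly_Mapping.single 0 c * ftensor x y"
  using ftensor_mult[of "Poly_Mapping.single 0 c" 1 x y] ftensor_single_zero[of c 1]
  by (metis mult_1 mult.right_neutral single_one)

lemma ftensor_scalar_right: "ftensor x (Poly_Mapping.single 0 c * y) = Poly_Mapping.single 0 c * ftensor x y"
  using ftensor_mult[of 1 "Poly_Mapping.single 0 c" x y] ftensor_single_zero[of 1 c]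
  by (metis mult_1 mult.right_neutral single_one)

lemma fdelta_pm_sum: "fdelta dg p = pm_sum (\<lambda>w c. Poly_Mapping.single 0 c * delta_word dg w) p"
  by (simp add: fdelta_def pm_sum_def fmul2_eq_times zero_list_def zero_prod_def)

lemma fdelta_add: "fdelta dg (x + y) = fdelta dg x + fdelta dg y"
  unfolding fdelta_pm_sum by (rule pm_sum_add) (simp_all add: single_add distrib_right)

lemma fdelta_single: "fdelta dg (Poly_Mapping.single w c) = Poly_Mapping.single 0 c * delta_word dg w"
  unfolding fdelta_pm_sum by (simp add: pm_sum_single)

lemma delta_word_Nil: "delta_word dg [] = 1"
proof -
  have "delta_word dg [] = Poly_Mapping.single (0, 0) 1" by (simp add: zero_list_def)
  then show ?thesis by (simp add: zero_prod_def[symmetric])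
qed

declare delta_word.simps(1) [simp del] delta_word_Nil [simp]

lemma fdelta_zero [simp]: "fdelta dg 0 = 0"
  by (simp add: fdelta_def)

lemma delta_word_append: "delta_word dg (v @ w) = delta_word dg v * delta_word dg w"
  by (induction v) (simp_all add: delta_word_Nil fmul2_eq_times mult.assoc del: delta_word.simps(1))

lemma fdelta_mult: "fdelta dg (x * y) = fdelta dg x * fdelta dg y"
proof (induction x rule: poly_mapping_induct)
  case (single v a)
  show ?case
  proof (induction y rule: poly_mapping_induct)
    case (single w b)
    have "fdelta dg (Poly_Mapping.single v a * Poly_Mapping.single w b)
       = Poly_Mapping.single 0 a * Poly_Mapping.single 0 b * (delta_word dg v * delta_word dg w)"
      by (simp add: mult_single fdelta_single plus_list_def delta_word_append single_zero_mult)
    also have "\<dots> = Poly_Mapping.single 0 a * (Poly_Mapping.single 0 b * delta_word dg v) * delta_word dg w"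
      by (simp add: mult.assoc)
    also have "Poly_Mapping.single 0 b * delta_word dg v = delta_word dg v * Poly_Mapping.single 0 b"
      by (rule single_zero_commute)
    finally show ?case by (simp add: fdelta_single mult.assoc)
  qed (simp_all add: fdelta_add distrib_left)
qed (simp_all add: fdelta_add distrib_right)

lemma fdelta_one: "fdelta dg 1 = 1"
  by (metis fdelta_single delta_word_Nil mult_1 single_one zero_list_def mult.right_neutral)

lemma fdelta_fgen: "fdelta dg (fgen g) = dg g"
  by (simp add: fgen_def fdelta_single delta_word_Nil fmul2_eq_times)

lemma fdelta_scalar: "fdelta dg (Poly_Mapping.single 0 c * x) = Poly_Mapping.single 0 c * fdelta dg x"
  by (simp add: fdelta_mult fdelta_single delta_word_Nil zero_list_def)

lemma fcounit_pm_sum: "fcounit eg p = pm_sum (\<lambda>w c. c * prod_list (map eg w)) p"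
proof -
  have "(\<Prod>i<length w. eg (w ! i)) = prod_list (map eg w)" for w
    by (induction w) (simp_all add: prod.lessThan_Suc_shift del: prod.lessThan_Suc)
  then show ?thesis by (simp add: fcounit_def pm_sum_def)
qed

lemma fcounit_add: "fcounit eg (x + y) = fcounit eg x + fcounit eg y"
  unfolding fcounit_pm_sum by (rule pm_sum_add) (simp_all add: distrib_right)

lemma fcounit_single: "fcounit eg (Poly_Mapping.single w c) = c * prod_list (map eg w)"
  unfolding fcounit_pm_sum by (simp add: pm_sum_single)

lemma fcounit_zero [simp]: "fcounit eg 0 = 0"
  by (simp add: fcounit_def)

lemma fcounit_mult: "fcounit eg (x * y) = fcounit eg x * fcounit eg y"
proof (induction x rule: poly_mapping_induct)
  case (single v a)
  show ?case
    by (induction y rule: poly_mapping_induct)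
       (simp_all add: mult_single fcounit_single plus_list_def fcounit_add distrib_left)
qed (simp_all add: fcounit_add distrib_right)

lemma fcounit_fgen: "fcounit eg (fgen g) = eg g"
  by (simp add: fgen_def fcounit_single)

lemma fcounit_scalar: "fcounit eg (Poly_Mapping.single 0 c) = c"
  by (simp add: fcounit_single zero_list_def)

lemma fcounit_power: "fcounit eg (x ^ n) = fcounit eg x ^ n"
  by (induction n) (simp_all add: fcounit_mult fcounit_scalar[of eg 1, simplified])

section \<open>Congruence modulo a two-sided ideal of a free algebra\<close>

definition smul :: "complex \<Rightarrow> 'g free_alg \<Rightarrow> 'g free_alg" where
  "smul c x = Poly_Mapping.single 0 c * x"

lemma smul_smul [simp]: "smul a (smul b x) = smul (a * b) x"
  by (simp add: smul_def mult.assoc[symmetric] single_zero_mult)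
lemma smul_mult_left [simp]: "smul a x * y = smul a (x * y)"
  by (simp add: smul_def mult.assoc)
lemma smul_mult_right [simp]: "x * smul a y = smul a (x * y)"
  by (metis smul_def mult.assoc single_zero_commute)
lemma smul_one [simp]: "smul 1 x = x"
  by (simp add: smul_def)
lemma smul_zero_left [simp]: "smul 0 x = 0"
  by (simp add: smul_def)
lemma smul_zero_right [simp]: "smul a 0 = 0"
  by (simp add: smul_def)
lemma smul_add_right: "smul a (x + y) = smul a x + smul a y"
  by (simp add: smul_def distrib_left)
lemma smul_add_left: "smul (a + b) x = smul a x + smul b x"
  by (simp add: smul_def single_add distrib_right)
lemma smul_minus_right: "smul a (- x) = - smul a x"
  by (simp add: smul_def)
lemma smul_minus_left: "smul (- a) x = - smul a x"
  by (simp add: smul_def single_uminus)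
lemma smul_diff_right: "smul a (x - y) = smul a x - smul a y"
  by (simp add: smul_def right_diff_distrib)

lemma single_eq_smul: "Poly_Mapping.single w c = smul c (Poly_Mapping.single w 1)"
  by (simp add: smul_def mult_single)

definition zpow :: "'a::monoid_mult \<Rightarrow> 'a \<Rightarrow> int \<Rightarrow> 'a" where
  "zpow x xi k = (if 0 \<le> k then x ^ nat k else xi ^ nat (- k))"

lemma zpow_0 [simp]: "zpow x xi 0 = 1"
  by (simp add: zpow_def)

lemma zpow_succ_nonneg: "0 \<le> k \<Longrightarrow> zpow x xi (k + 1) = x * zpow x xi k"
  by (simp add: zpow_def nat_add_distrib)

lemma zpow_pred_nonpos: "k \<le> 0 \<Longrightarrow> zpow x xi (k - 1) = xi * zpow x xi k"
  by (simp add: zpow_def) (smt (verit) Suc_nat_eq_nat_zadd1 power_Suc)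

lemma zpow_neg_succ: "k < 0 \<Longrightarrow> zpow x xi k = xi * zpow x xi (k + 1)"
  using zpow_pred_nonpos[of "k + 1" x xi] by simp

lemma zpow_pos_pred: "0 < k \<Longrightarrow> zpow x xi k = x * zpow x xi (k - 1)"
  using zpow_succ_nonneg[of "k - 1" x xi] by simp

locale free_ideal =
  fixes I :: "'g free_alg set"
  assumes ideal_zero: "0 \<in> I"
    and ideal_add: "x \<in> I \<Longrightarrow> y \<in> I \<Longrightarrow> x + y \<in> I"
    and ideal_mult_left: "y \<in> I \<Longrightarrow> x * y \<in> I"
    and ideal_mult_right: "y \<in> I \<Longrightarrow> y * x \<in> I"
begin

lemma ideal_uminus: "y \<in> I \<Longrightarrow> - y \<in> I"
  using ideal_mult_left[of y "- 1"] by simp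

lemma ideal_diff: "x \<in> I \<Longrightarrow> y \<in> I \<Longrightarrow> x - y \<in> I"
  using ideal_add[of x "- y"] ideal_uminus[of y] by simp

definition mod_eq :: "'g free_alg \<Rightarrow> 'g free_alg \<Rightarrow> bool" (infix "\<approx>" 50) where
  "x \<approx> y \<longleftrightarrow> x - y \<in> I"

lemma mod_eq_refl [simp, intro]: "x \<approx> x"
  by (simp add: mod_eq_def ideal_zero)

lemma mod_eq_sym: "x \<approx> y \<Longrightarrow> y \<approx> x"
  unfolding mod_eq_def using ideal_uminus by fastforce

lemma mod_eq_trans [trans]: "x \<approx> y \<Longrightarrow> y \<approx> z \<Longrightarrow> x \<approx> z"
  unfolding mod_eq_def using ideal_add by fastforce

lemma mod_eq_add: "x \<approx> x' \<Longrightarrow> y \<approx> y' \<Longrightarrow> x + y \<approx> x' + y'"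
  unfolding mod_eq_def using ideal_add[of "x - x'" "y - y'"] by (simp add: algebra_simps)

lemma mod_eq_diff: "x \<approx> x' \<Longrightarrow> y \<approx> y' \<Longrightarrow> x - y \<approx> x' - y'"
  unfolding mod_eq_def using ideal_diff[of "x - x'" "y - y'"] by (simp add: algebra_simps)

lemma mod_eq_mult_left: "x \<approx> x' \<Longrightarrow> y * x \<approx> y * x'"
  unfolding mod_eq_def using ideal_mult_left[of "x - x'" y] by (simp add: right_diff_distrib)

lemma mod_eq_mult_right: "x \<approx> x' \<Longrightarrow> x * y \<approx> x' * y"
  unfolding mod_eq_def using ideal_mult_right[of "x - x'" y] by (simp add: left_diff_distrib)

lemma mod_eq_mult: "x \<approx> x' \<Longrightarrow> y \<approx> y' \<Longrightarrow> x * y \<approx> x' * y'"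
  using mod_eq_mult_left mod_eq_mult_right mod_eq_trans by blast

lemma mod_eq_smul: "x \<approx> x' \<Longrightarrow> smul c x \<approx> smul c x'"
  unfolding smul_def by (rule mod_eq_mult_left)

lemma mod_eq_smul_cancel: "smul c x \<approx> smul c y \<Longrightarrow> c \<noteq> 0 \<Longrightarrow> x \<approx> y"
  using mod_eq_smul[of "smul c x" "smul c y" "inverse c"] by simp

lemma mod_eq_power: "x \<approx> smul m y \<Longrightarrow> x ^ n \<approx> smul (m ^ n) (y ^ n)"
proof (induction n)
  case (Suc n)
  then have "x * x ^ n \<approx> smul m y * smul (m ^ n) (y ^ n)" by (intro mod_eq_mult)
  then show ?case by (simp add: mult.commute)
qed simp

lemma mod_eq_zero_in_context: "x * y \<approx> 0 \<Longrightarrow> l * (x * (y * r)) \<approx> 0"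
  using mod_eq_mult_left[OF mod_eq_mult_right[of "x * y" 0 r], of l] by (simp add: mult.assoc)

definition qcommute :: "'g free_alg \<Rightarrow> 'g free_alg \<Rightarrow> complex \<Rightarrow> bool" where
  "qcommute x y a \<longleftrightarrow> x * y \<approx> smul a (y * x)"

lemma qcommute_refl: "qcommute x x 1"
  by (simp add: qcommute_def)

lemma qcommute_one_left: "qcommute 1 y 1" and qcommute_one_right: "qcommute x 1 1"
  by (simp_all add: qcommute_def)

lemma qcommute_mult_left:
  assumes "qcommute x y a" "qcommute x' y b"
  shows "qcommute (x * x') y (a * b)"
proof -
  have "x * x' * y = x * (x' * y)" by (simp add: mult.assoc)
  also have "\<dots> \<approx> x * smul b (y * x')" using assms(2) unfolding qcommute_def by (rule mod_eq_mult_left)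
  also have "\<dots> = smul b ((x * y) * x')" by (simp add: mult.assoc)
  also have "\<dots> \<approx> smul b (smul a (y * x) * x')"
    using assms(1) unfolding qcommute_def by (intro mod_eq_smul mod_eq_mult_right)
  also have "\<dots> = smul (a * b) (y * (x * x'))" by (simp add: mult.assoc mult.commute)
  finally show ?thesis unfolding qcommute_def .
qed

lemma qcommute_mult_right:
  assumes "qcommute x y a" "qcommute x y' b"
  shows "qcommute x (y * y') (a * b)"
proof -
  have "x * (y * y') = (x * y) * y'" by (simp add: mult.assoc)
  also have "\<dots> \<approx> smul a (y * x) * y'" using assms(1) unfolding qcommute_def by (rule mod_eq_mult_right)
  also have "\<dots> = smul a (y * (x * y'))" by (simp add: mult.assoc)
  also have "\<dots> \<approx> smul a (y * smul b (y' * x))"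
    using assms(2) unfolding qcommute_def by (intro mod_eq_smul mod_eq_mult_left)
  also have "\<dots> = smul (a * b) ((y * y') * x)" by (simp add: mult.assoc)
  finally show ?thesis unfolding qcommute_def .
qed

lemma qcommute_sym: "qcommute x y a \<Longrightarrow> a \<noteq> 0 \<Longrightarrow> qcommute y x (inverse a)"
  unfolding qcommute_def
  using mod_eq_smul[of "x * y" "smul a (y * x)" "inverse a"] by (simp add: mod_eq_sym)

lemma qcommuteD: "qcommute x y a \<Longrightarrow> x * y \<approx> smul a (y * x)"
  by (simp add: qcommute_def)

lemma qcommute_zero: "qcommute x y 0 \<Longrightarrow> qcommute y x 0 \<Longrightarrow> qcommute x y a"
  unfolding qcommute_def by (metis mod_eq_smul mod_eq_sym mod_eq_trans smul_zero_left smul_zero_right)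

lemma qcommute_zero_reverse: "qcommute x y c \<Longrightarrow> x * y \<approx> 0 \<Longrightarrow> c \<noteq> 0 \<Longrightarrow> y * x \<approx> 0"
  unfolding qcommute_def by (metis mod_eq_smul_cancel mod_eq_sym mod_eq_trans smul_zero_right)

lemma qcommute_power_left: "qcommute x y a \<Longrightarrow> qcommute (x ^ n) y (a ^ n)"
  by (induction n) (simp_all add: qcommute_one_left qcommute_mult_left)

lemma qcommute_power_right: "qcommute x y a \<Longrightarrow> qcommute x (y ^ n) (a ^ n)"
  by (induction n) (simp_all add: qcommute_one_right qcommute_mult_right)

lemma qcommute_zpow_left:
  assumes "qcommute x y a" "qcommute xi y (inverse a)"
  shows "qcommute (zpow x xi k) y (a powi k)"
  using qcommute_power_left[OF assms(1), of "nat k"] qcommute_power_left[OF assms(2), of "nat (- k)"]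
  by (simp add: zpow_def power_int_def power_inverse)

lemma qcommute_zpow_right:
  assumes "qcommute x y a" "qcommute x yi (inverse a)"
  shows "qcommute x (zpow y yi k) (a powi k)"
  using qcommute_power_right[OF assms(1), of "nat k"] qcommute_power_right[OF assms(2), of "nat (- k)"]
  by (simp add: zpow_def power_int_def power_inverse)

lemma qcommute_swap: "qcommute x y a \<Longrightarrow> x * (y * r) \<approx> smul a (y * (x * r))"
  unfolding qcommute_def using mod_eq_mult_right[of "x * y" "smul a (y * x)" r]
  by (simp add: mult.assoc)

lemma qcommute_add_right: "qcommute z x a \<Longrightarrow> qcommute z y a \<Longrightarrow> qcommute z (x + y) a"
  unfolding qcommute_def by (simp add: distrib_left distrib_right smul_add_right mod_eq_add)

lemma qcommute_smul_right: "qcommute z x a \<Longrightarrow> qcommute z (smul c x) a"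
  unfolding qcommute_def using mod_eq_smul[of "z * x" "smul a (x * z)" c] by (simp add: mult.commute)

lemma central_if_commutes_with_generators:
  assumes "\<And>g. qcommute z (fgen g) 1"
  shows "qcommute z p 1"
proof (induction p rule: poly_mapping_induct)
  case (single w c)
  have "qcommute z (foldr (\<lambda>g p. fgen g * p) w 1) 1"
    by (induction w) (use qcommute_mult_right[OF assms] in \<open>simp_all add: qcommute_one_right\<close>)
  then show ?case by (subst single_eq_smul) (intro qcommute_smul_right, simp add: single_word_eq_foldr)
next
  case (add x y) then show ?case by (rule qcommute_add_right)
qed (simp add: qcommute_def)

text \<open>In the applications e is a corner idempotent (up to a scalar) and xi an inverse of x
  inside that corner.\<close>

lemma zpow_step_up:
  assumes "x * xi \<approx> e" and ee: "e * e \<approx> smul \<nu> e"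
  shows "e * (x * zpow x xi k) \<approx> smul (if k < 0 then \<nu> else 1) (e * zpow x xi (k + 1))"
proof (cases "k < 0")
  case True
  have "e * (x * zpow x xi k) = e * ((x * xi) * zpow x xi (k + 1))"
    using True by (simp add: zpow_neg_succ mult.assoc)
  also have "\<dots> \<approx> e * (e * zpow x xi (k + 1))" using assms(1) by (intro mod_eq_mult_left mod_eq_mult_right)
  also have "\<dots> \<approx> smul \<nu> (e * zpow x xi (k + 1))"
    using mod_eq_mult_right[OF ee, of "zpow x xi (k + 1)"] by (simp add: mult.assoc)
  finally show ?thesis using True by simp
qed (simp add: zpow_succ_nonneg)

lemma zpow_step_down:
  assumes "xi * x \<approx> e" and ee: "e * e \<approx> smul \<nu> e"
  shows "e * (xi * zpow x xi k) \<approx> smul (if 0 < k then \<nu> else 1) (e * zpow x xi (k - 1))"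
proof (cases "0 < k")
  case True
  have "e * (xi * zpow x xi k) = e * ((xi * x) * zpow x xi (k - 1))"
    using True by (simp add: zpow_pos_pred mult.assoc)
  also have "\<dots> \<approx> e * (e * zpow x xi (k - 1))" using assms(1) by (intro mod_eq_mult_left mod_eq_mult_right)
  also have "\<dots> \<approx> smul \<nu> (e * zpow x xi (k - 1))"
    using mod_eq_mult_right[OF ee, of "zpow x xi (k - 1)"] by (simp add: mult.assoc)
  finally show ?thesis using True by simp
qed (simp add: zpow_pred_nonpos)

lemma zpow_step_up_idem: "x * xi \<approx> e \<Longrightarrow> e * e \<approx> e \<Longrightarrow> e * (x * zpow x xi k) \<approx> e * zpow x xi (k + 1)"
  using zpow_step_up[of x xi e 1 k] by simp

lemma zpow_step_down_idem: "xi * x \<approx> e \<Longrightarrow> e * e \<approx> e \<Longrightarrow> e * (xi * zpow x xi k) \<approx> e * zpow x xi (k - 1)"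
  using zpow_step_down[of xi x e 1 k] by simp

lemma zpow_mod_eq_smul:
  "xi' \<approx> smul m xi \<Longrightarrow> zpow x xi' k \<approx> smul (if k < 0 then m ^ nat (- k) else 1) (zpow x xi k)"
  using mod_eq_power[of xi' m xi "nat (- k)"] by (simp add: zpow_def)

definition tensor_mod_eq :: "'g free_alg2 \<Rightarrow> 'g free_alg2 \<Rightarrow> bool" (infix "\<simeq>" 50) where
  "x \<simeq> y \<longleftrightarrow> x - y \<in> tens_ker I"

lemma tens_ker_mult_left: "t \<in> tens_ker I \<Longrightarrow> X * t \<in> tens_ker I"
  and tens_ker_mult_right: "t \<in> tens_ker I \<Longrightarrow> t * X \<in> tens_ker I"
proof (induction rule: tens_ker.induct)
  case (left p w)
  have "ftensor (Poly_Mapping.single u c) (Poly_Mapping.single v 1) * ftensor p w \<in> tens_ker I"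
    "ftensor p w * ftensor (Poly_Mapping.single u c) (Poly_Mapping.single v 1) \<in> tens_ker I" for u v c
    using left by (simp_all add: ftensor_mult tens_ker.left ideal_mult_left ideal_mult_right)
  then show "X * ftensor p w \<in> tens_ker I" "ftensor p w * X \<in> tens_ker I"
    by (induction X rule: poly_mapping_induct)
       (auto simp: ftensor_single distrib_left distrib_right tens_ker.zero tens_ker.add)
next
  case (right p w)
  have "ftensor (Poly_Mapping.single u c) (Poly_Mapping.single v 1) * ftensor w p \<in> tens_ker I"
    "ftensor w p * ftensor (Poly_Mapping.single u c) (Poly_Mapping.single v 1) \<in> tens_ker I" for u v c
    using right by (simp_all add: ftensor_mult tens_ker.right ideal_mult_left ideal_mult_right)
  then show "X * ftensor w p \<in> tens_ker I" "ftensor w p * X \<in> tens_ker I"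
    by (induction X rule: poly_mapping_induct)
       (auto simp: ftensor_single distrib_left distrib_right tens_ker.zero tens_ker.add)
qed (simp_all add: distrib_left distrib_right tens_ker.zero tens_ker.add)

lemma tensor_mod_eq_refl [simp, intro]: "x \<simeq> x"
  by (simp add: tensor_mod_eq_def tens_ker.zero)

lemma tensor_mod_eq_trans [trans]: "x \<simeq> y \<Longrightarrow> y \<simeq> z \<Longrightarrow> x \<simeq> z"
  unfolding tensor_mod_eq_def using tens_ker.add by fastforce

lemma tensor_mod_eq_add: "x \<simeq> x' \<Longrightarrow> y \<simeq> y' \<Longrightarrow> x + y \<simeq> x' + y'"
  unfolding tensor_mod_eq_def using tens_ker.add[of "x - x'" I "y - y'"] by (simp add: algebra_simps)

lemma tensor_mod_eq_mult: "x \<simeq> x' \<Longrightarrow> y \<simeq> y' \<Longrightarrow> x * y \<simeq> x' * y'"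
  unfolding tensor_mod_eq_def
  using tens_ker.add[OF tens_ker_mult_right[of "x - x'" y] tens_ker_mult_left[of "y - y'" x']]
  by (simp add: algebra_simps)

lemma tensor_mod_eq_sum: "(\<And>x. x \<in> S \<Longrightarrow> f x \<simeq> g x) \<Longrightarrow> sum f S \<simeq> sum g S"
  by (induction S rule: infinite_finite_induct) (simp_all add: tensor_mod_eq_add)

lemma ftensor_mod_eq: "x \<approx> x' \<Longrightarrow> y \<approx> y' \<Longrightarrow> ftensor x y \<simeq> ftensor x' y'"
  unfolding tensor_mod_eq_def mod_eq_def
  using tens_ker.add[OF tens_ker.left[of "x - x'" I y] tens_ker.right[of "y - y'" I x']]
  by (simp add: ftensor_left.diff ftensor_right.diff)

end

section \<open>The algebra A(DT^2_q) modulo its defining ideal\<close>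

text \<open>z_ad is the central idempotent z = D^{-1}ad; z_bc = D^{-1}bc, and 1 - z = -q^{-1} z_bc.\<close>

definition z_ad :: "gen free_alg" where "z_ad = gDi * (gA * gD)"
definition z_bc :: "gen free_alg" where "z_bc = gDi * (gB * gC)"

text \<open>Inverses of a and d in the corner z_ad, and of c and b in the corner z_bc.\<close>

definition inv_a :: "gen free_alg" where "inv_a = gDi * gD"
definition inv_d :: "gen free_alg" where "inv_d = gDi * gA"
definition inv_c :: "gen free_alg" where "inv_c = gDi * gB"
definition inv_b :: "gen free_alg" where "inv_b = gC * gDi"

definition basis0 :: "int \<Rightarrow> int \<Rightarrow> gen free_alg" where
  "basis0 k l = z_ad * (zpow gA inv_a k * zpow gD inv_d l)"

definition basis1 :: "int \<Rightarrow> int \<Rightarrow> gen free_alg" where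
  "basis1 k l = z_bc * (zpow gC inv_c k * zpow gB inv_b l)"

locale dt_quotient =
  fixes q :: complex
  assumes q_nonzero: "q \<noteq> 0"

sublocale dt_quotient \<subseteq> free_ideal "ideal_DT q"
  unfolding ideal_DT_def
proof
  show "y \<in> gen_ideal (rels_DT q) \<Longrightarrow> x * y \<in> gen_ideal (rels_DT q)" for x y
    using gen_ideal.lmul[of y _ x] by (simp add: fmul_eq_times)
  show "y \<in> gen_ideal (rels_DT q) \<Longrightarrow> y * x \<in> gen_ideal (rels_DT q)" for x y
    using gen_ideal.rmul[of y _ x] by (simp add: fmul_eq_times)
qed (simp_all add: gen_ideal.zero gen_ideal.add)

context dt_quotient
begin

notation mod_eq (infix "\<approx>" 50) and tensor_mod_eq (infix "\<simeq>" 50)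

abbreviation A where "A \<equiv> gA"
abbreviation B where "B \<equiv> gB"
abbreviation C where "C \<equiv> gC"
abbreviation D where "D \<equiv> gD"
abbreviation Di where "Di \<equiv> gDi"

lemma detq_eq: "detq q = A * D - smul (inverse q) (B * C)"
  by (simp add: detq_def fmul_eq_times fscal_eq_single smul_def)

lemma rels_DT_eq:
  "rels_DT q = {A * B - smul (inverse q) (B * A), C * D - smul (inverse q) (D * C),
     A * C - smul q (C * A), B * D - smul q (D * B), A * D - D * A, B * C - smul (q^2) (C * B),
     detq q * Di - 1, Di * detq q - 1} \<union> {A * B, A * C, C * D, B * D}"
  by (simp add: rels_DT_def rels_U_def fmul_eq_times fscal_eq_single smul_def)

lemma relation_mod_eq: "x - y \<in> rels_DT q \<Longrightarrow> x \<approx> y"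
  unfolding mod_eq_def by (simp add: ideal_DT_def gen_ideal.gen)

lemma AB_zero: "A * B \<approx> 0" and AC_zero: "A * C \<approx> 0"
  and CD_zero: "C * D \<approx> 0" and BD_zero: "B * D \<approx> 0"
  and AD_commute: "A * D \<approx> D * A" and BC_qcommute: "B * C \<approx> smul (q^2) (C * B)"
  and detq_Di: "detq q * Di \<approx> 1" and Di_detq: "Di * detq q \<approx> 1"
  by (rule relation_mod_eq; simp add: rels_DT_eq)+

lemma BA_zero: "B * A \<approx> 0" and CA_zero: "C * A \<approx> 0"
  and DC_zero: "D * C \<approx> 0" and DB_zero: "D * B \<approx> 0"
proof -
  have "qcommute A B (inverse q)" "qcommute A C q" "qcommute C D (inverse q)" "qcommute B D q"
    unfolding qcommute_def by (rule relation_mod_eq; simp add: rels_DT_eq)+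
  then show "B * A \<approx> 0" "C * A \<approx> 0" "D * C \<approx> 0" "D * B \<approx> 0"
    using AB_zero AC_zero CD_zero BD_zero q_nonzero by (auto intro: qcommute_zero_reverse)
qed

lemma qcommute_scalar_cong: "qcommute x y a \<Longrightarrow> a = b \<Longrightarrow> qcommute x y b"
  by simp

lemma detq_qcommute_A: "qcommute A (detq q) 1"
proof -
  have "A * detq q = A * (A * D) - smul (inverse q) (A * (B * C))"
    by (simp add: detq_eq algebra_simps)
  also have "\<dots> \<approx> A * (D * A) - smul (inverse q) (B * (C * A))"
  proof (rule mod_eq_diff)
    show "A * (A * D) \<approx> A * (D * A)" by (intro mod_eq_mult_left AD_commute)
    have "A * (B * C) \<approx> 0" "B * (C * A) \<approx> 0"
      using mod_eq_zero_in_context[OF AB_zero, of 1 C] mod_eq_zero_in_context[OF CA_zero, of B 1] by simp_all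
    then show "smul (inverse q) (A * (B * C)) \<approx> smul (inverse q) (B * (C * A))"
      by (intro mod_eq_smul) (meson mod_eq_sym mod_eq_trans)
  qed
  also have "\<dots> = detq q * A" by (simp add: detq_eq algebra_simps)
  finally show ?thesis by (simp add: qcommute_def)
qed

lemma detq_qcommute_D: "qcommute D (detq q) 1"
proof -
  have "D * detq q = D * (A * D) - smul (inverse q) (D * (B * C))"
    by (simp add: detq_eq algebra_simps)
  also have "\<dots> \<approx> (A * D) * D - smul (inverse q) (B * (C * D))"
  proof (rule mod_eq_diff)
    show "D * (A * D) \<approx> (A * D) * D"
      using mod_eq_mult_right[OF mod_eq_sym[OF AD_commute], of D] by (simp add: mult.assoc)
    have "D * (B * C) \<approx> 0" "B * (C * D) \<approx> 0"
      using mod_eq_zero_in_context[OF DB_zero, of 1 C] mod_eq_zero_in_context[OF CD_zero, of B 1] by simp_all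
    then show "smul (inverse q) (D * (B * C)) \<approx> smul (inverse q) (B * (C * D))"
      by (intro mod_eq_smul) (meson mod_eq_sym mod_eq_trans)
  qed
  also have "\<dots> = detq q * D" by (simp add: detq_eq algebra_simps)
  finally show ?thesis by (simp add: qcommute_def)
qed

lemma detq_qcommute_C: "qcommute C (detq q) (inverse (q^2))"
proof -
  have "C * detq q = C * (A * D) - smul (inverse q) (C * (B * C))"
    by (simp add: detq_eq algebra_simps)
  also have "\<dots> \<approx> 0 - smul (inverse q) (C * (B * C))"
    using mod_eq_zero_in_context[OF CA_zero, of 1 D] by (intro mod_eq_diff) simp_all
  finally have 1: "C * detq q \<approx> - smul (inverse q) (C * (B * C))" by simp
  have "detq q * C = A * (D * C) - smul (inverse q) (B * C * C)"
    by (simp add: detq_eq algebra_simps)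
  also have "\<dots> \<approx> 0 - smul (inverse q) (smul (q^2) (C * B) * C)"
    using mod_eq_zero_in_context[OF DC_zero, of A 1]
    by (intro mod_eq_diff mod_eq_smul mod_eq_mult_right BC_qcommute) simp
  finally have "smul (inverse (q^2)) (detq q * C)
      \<approx> smul (inverse (q^2)) (- smul (inverse q * q^2) (C * (B * C)))"
    by (intro mod_eq_smul) (simp add: mult.assoc)
  also have "\<dots> = - smul (inverse q) (C * (B * C))"
    using q_nonzero by (simp add: smul_minus_right field_simps)
  finally show ?thesis unfolding qcommute_def using 1 by (meson mod_eq_sym mod_eq_trans)
qed

lemma detq_qcommute_B: "qcommute B (detq q) (q^2)"
proof -
  have "B * detq q = B * (A * D) - smul (inverse q) (B * (B * C))"
    by (simp add: detq_eq algebra_simps)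
  also have "\<dots> \<approx> 0 - smul (inverse q) (B * smul (q^2) (C * B))"
    using mod_eq_zero_in_context[OF BA_zero, of 1 D]
    by (intro mod_eq_diff mod_eq_smul mod_eq_mult_left BC_qcommute) simp
  finally have 1: "B * detq q \<approx> - smul (inverse q * q^2) (B * (C * B))" by simp
  have "detq q * B = A * (D * B) - smul (inverse q) (B * (C * B))"
    by (simp add: detq_eq algebra_simps)
  also have "\<dots> \<approx> 0 - smul (inverse q) (B * (C * B))"
    using mod_eq_zero_in_context[OF DB_zero, of A 1] by (intro mod_eq_diff) simp_all
  finally have "smul (q^2) (detq q * B) \<approx> smul (q^2) (- smul (inverse q) (B * (C * B)))"
    by (intro mod_eq_smul) simp
  also have "\<dots> = - smul (inverse q * q^2) (B * (C * B))"
    by (simp add: smul_minus_right mult.commute)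
  finally show ?thesis unfolding qcommute_def using 1 by (meson mod_eq_sym mod_eq_trans)
qed

text \<open>D^{-1} inverts detq on both sides.\<close>

lemma qcommute_Di_of_detq:
  assumes "qcommute x (detq q) a"
  shows "qcommute Di x a"
proof -
  have "Di * x = Di * (x * 1)" by simp
  also have "\<dots> \<approx> Di * (x * (detq q * Di))" by (intro mod_eq_mult_left mod_eq_sym[OF detq_Di])
  also have "\<dots> = Di * ((x * detq q) * Di)" by (simp add: mult.assoc)
  also have "\<dots> \<approx> Di * (smul a (detq q * x) * Di)"
    using assms unfolding qcommute_def by (intro mod_eq_mult_left mod_eq_mult_right)
  also have "\<dots> = smul a ((Di * detq q) * (x * Di))" by (simp add: mult.assoc)
  also have "\<dots> \<approx> smul a (1 * (x * Di))" by (intro mod_eq_smul mod_eq_mult_right Di_detq)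
  finally show ?thesis unfolding qcommute_def by simp
qed

lemma qcommute_Di_A: "qcommute Di A 1" and qcommute_Di_D: "qcommute Di D 1"
  and qcommute_Di_C: "qcommute Di C (inverse (q^2))" and qcommute_Di_B: "qcommute Di B (q^2)"
  by (rule qcommute_Di_of_detq, rule detq_qcommute_A detq_qcommute_D detq_qcommute_C detq_qcommute_B)+

lemma qcommute_A_Di: "qcommute A Di 1" and qcommute_D_Di: "qcommute D Di 1"
  and qcommute_C_Di: "qcommute C Di (q^2)" and qcommute_B_Di: "qcommute B Di (inverse (q^2))"
  using qcommute_sym[OF qcommute_Di_A] qcommute_sym[OF qcommute_Di_D]
    qcommute_sym[OF qcommute_Di_C] qcommute_sym[OF qcommute_Di_B] q_nonzero
  by simp_all

lemma qcommute_A_D: "qcommute A D 1" and qcommute_D_A: "qcommute D A 1"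
  and qcommute_B_C: "qcommute B C (q^2)" and qcommute_C_B: "qcommute C B (inverse (q^2))"
  using AD_commute BC_qcommute qcommute_sym[of A D 1] qcommute_sym[of B C "q^2"] q_nonzero
  by (simp_all add: qcommute_def)

lemma qcommute_letters_zero:
  "qcommute A B 0" "qcommute B A 0" "qcommute A C 0" "qcommute C A 0"
  "qcommute D B 0" "qcommute B D 0" "qcommute D C 0" "qcommute C D 0"
  using AB_zero BA_zero AC_zero CA_zero DB_zero BD_zero DC_zero CD_zero
  by (simp_all add: qcommute_def)

lemmas qcommute_letters = qcommute_refl qcommute_letters_zero
  qcommute_A_D qcommute_D_A qcommute_B_C qcommute_C_B
  qcommute_Di_A qcommute_Di_D qcommute_Di_C qcommute_Di_B
  qcommute_A_Di qcommute_D_Di qcommute_C_Di qcommute_B_Di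

lemma qcommute_z_ad_letters: "qcommute z_ad A 1" "qcommute z_ad D 1" "qcommute z_ad Di 1"
  and qcommute_z_bc_letters: "qcommute z_bc Di 1" "qcommute z_bc B 1" "qcommute z_bc C 1"
  and qcommute_corners_zero: "qcommute z_ad z_bc 0" "qcommute z_bc z_ad 0"
  and qcommute_off_corner: "qcommute B z_ad 0" "qcommute C z_ad 0" "qcommute A z_bc 0" "qcommute D z_bc 0"
  and qcommute_BC_Di: "qcommute (B * C) Di 1"
  and qcommute_corner_inverses: "qcommute D inv_a 1" "qcommute inv_d A 1" "qcommute inv_d inv_a 1"
    "qcommute B inv_c (inverse (q^2))" "qcommute inv_b C (inverse (q^2))" "qcommute inv_b inv_c (q^2)"
  unfolding z_ad_def z_bc_def inv_a_def inv_d_def inv_c_def inv_b_def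
  by (rule qcommute_scalar_cong, (rule qcommute_mult_left qcommute_mult_right qcommute_letters)+,
      simp add: q_nonzero)+

lemma qcommute_z_ad_off_letters: "qcommute z_ad B 1" "qcommute z_ad C 1"
  and qcommute_z_bc_off_letters: "qcommute z_bc A 1" "qcommute z_bc D 1"
  unfolding z_ad_def z_bc_def
  by (rule qcommute_zero; rule qcommute_scalar_cong,
      (rule qcommute_mult_left qcommute_mult_right qcommute_letters)+, simp)+

lemma z_ad_central: "qcommute z_ad p 1" and z_bc_central: "qcommute z_bc p 1"
proof -
  note letters = gA_def[symmetric] gB_def[symmetric] gC_def[symmetric] gD_def[symmetric] gDi_def[symmetric]
  show "qcommute z_ad p 1"
  proof (rule central_if_commutes_with_generators)
    show "qcommute z_ad (fgen g) 1" for g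
      by (cases g) (simp_all add: letters qcommute_z_ad_letters qcommute_z_ad_off_letters)
  qed
  show "qcommute z_bc p 1"
  proof (rule central_if_commutes_with_generators)
    show "qcommute z_bc (fgen g) 1" for g
      by (cases g) (simp_all add: letters qcommute_z_bc_letters qcommute_z_bc_off_letters)
  qed
qed

lemma z_ad_central': "qcommute p z_ad 1" and z_bc_central': "qcommute p z_bc 1"
  using qcommute_sym[OF z_ad_central[of p]] qcommute_sym[OF z_bc_central[of p]] by simp_all

lemma z_ad_minus_z_bc: "z_ad - smul (inverse q) z_bc \<approx> 1"
  using Di_detq by (simp add: detq_eq z_ad_def z_bc_def algebra_simps smul_diff_right)

lemma z_ad_z_bc: "z_ad * z_bc \<approx> 0" and z_bc_z_ad: "z_bc * z_ad \<approx> 0"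
  using qcommute_corners_zero by (simp_all add: qcommute_def)

lemma mod_eq_corner_split: "x \<approx> z_ad * x - smul (inverse q) (z_bc * x)"
  using mod_eq_mult_right[OF mod_eq_sym[OF z_ad_minus_z_bc], of x] by (simp add: algebra_simps)

lemma z_ad_absorb: "z_bc * x \<approx> 0 \<Longrightarrow> z_ad * x \<approx> x"
proof -
  assume "z_bc * x \<approx> 0"
  then have "z_ad * x - smul (inverse q) (z_bc * x) \<approx> z_ad * x - smul (inverse q) 0"
    by (intro mod_eq_diff mod_eq_refl mod_eq_smul)
  then have "x \<approx> z_ad * x" using mod_eq_trans[OF mod_eq_corner_split[of x]] by simp
  then show ?thesis by (rule mod_eq_sym)
qed

lemma z_bc_absorb: "z_ad * x \<approx> 0 \<Longrightarrow> z_bc * x \<approx> smul (- q) x"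
proof -
  assume "z_ad * x \<approx> 0"
  then have "z_ad * x - smul (inverse q) (z_bc * x) \<approx> 0 - smul (inverse q) (z_bc * x)"
    by (intro mod_eq_diff mod_eq_refl)
  then have "x \<approx> - smul (inverse q) (z_bc * x)"
    using mod_eq_trans[OF mod_eq_corner_split[of x]] by simp
  then have "smul (- q) x \<approx> smul (- q) (- smul (inverse q) (z_bc * x))" by (rule mod_eq_smul)
  then have "smul (- q) x \<approx> z_bc * x" using q_nonzero by (simp add: smul_minus_right smul_minus_left)
  then show ?thesis by (rule mod_eq_sym)
qed

lemma z_ad_idem: "z_ad * z_ad \<approx> z_ad"
  by (rule z_ad_absorb[OF z_bc_z_ad])

lemma z_bc_square: "z_bc * z_bc \<approx> smul (- q) z_bc"
  by (rule z_bc_absorb[OF z_ad_z_bc])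

lemma A_inv_a: "A * inv_a \<approx> z_ad" and inv_a_A: "inv_a * A \<approx> z_ad"
  and D_inv_d: "D * inv_d \<approx> z_ad" and inv_d_D: "inv_d * D \<approx> z_ad"
  and C_inv_c: "C * inv_c \<approx> z_bc" and inv_c_C: "inv_c * C \<approx> z_bc"
  and B_inv_b: "B * inv_b \<approx> z_bc" and inv_b_B: "inv_b * B \<approx> z_bc"
proof -
  have "C * (Di * B) \<approx> smul (q^2) (Di * (C * B))" by (rule qcommute_swap[OF qcommute_C_Di])
  also have "\<dots> \<approx> smul (q^2) (Di * smul (inverse (q^2)) (B * C))"
    by (intro mod_eq_smul mod_eq_mult_left qcommuteD[OF qcommute_C_B])
  finally have CDiB: "C * (Di * B) \<approx> Di * (B * C)" using q_nonzero by simp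
  show "A * inv_a \<approx> z_ad"
    unfolding inv_a_def z_ad_def using qcommute_swap[OF qcommute_A_Di, of D] by simp
  show "inv_a * A \<approx> z_ad"
    unfolding inv_a_def z_ad_def using mod_eq_mult_left[OF qcommuteD[OF qcommute_D_A], of Di]
    by (simp add: mult.assoc)
  have "D * (Di * A) \<approx> Di * (D * A)" using qcommute_swap[OF qcommute_D_Di, of A] by simp
  also have "\<dots> \<approx> Di * (A * D)" using mod_eq_mult_left[OF qcommuteD[OF qcommute_D_A], of Di] by simp
  finally show "D * inv_d \<approx> z_ad" unfolding inv_d_def z_ad_def .
  show "inv_d * D \<approx> z_ad" "inv_c * C \<approx> z_bc"
    by (simp_all add: inv_d_def inv_c_def z_ad_def z_bc_def mult.assoc)
  show "C * inv_c \<approx> z_bc" using CDiB by (simp add: inv_c_def z_bc_def)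
  show "inv_b * B \<approx> z_bc" using CDiB by (simp add: inv_b_def z_bc_def mult.assoc)
  show "B * inv_b \<approx> z_bc"
    using qcommuteD[OF qcommute_BC_Di] by (simp add: inv_b_def z_bc_def mult.assoc)
qed

lemma qcommute_D_zpow_a: "qcommute D (zpow A inv_a k) 1"
  using qcommute_zpow_right[of D A 1 inv_a k] qcommute_corner_inverses(1) by (simp add: qcommute_letters)

lemma qcommute_inv_d_zpow_a: "qcommute inv_d (zpow A inv_a k) 1"
  using qcommute_zpow_right[of inv_d A 1 inv_a k] qcommute_corner_inverses(2,3) by simp

lemma qcommute_B_zpow_c: "qcommute B (zpow C inv_c k) ((q^2) powi k)"
  using qcommute_zpow_right[of B C "q^2" inv_c k] qcommute_corner_inverses(4) qcommute_B_C by simp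

lemma qcommute_inv_b_zpow_c: "qcommute inv_b (zpow C inv_c k) ((inverse (q^2)) powi k)"
  using qcommute_zpow_right[of inv_b C "inverse (q^2)" inv_c k] qcommute_corner_inverses(5,6) by simp

lemma A_mult_basis0: "A * basis0 k l \<approx> basis0 (k + 1) l"
proof -
  have "A * basis0 k l \<approx> (z_ad * (A * zpow A inv_a k)) * zpow D inv_d l"
    unfolding basis0_def using qcommute_swap[OF z_ad_central'] by (simp add: mult.assoc)
  also have "\<dots> \<approx> (z_ad * zpow A inv_a (k + 1)) * zpow D inv_d l"
    by (intro mod_eq_mult_right zpow_step_up_idem A_inv_a z_ad_idem)
  finally show ?thesis unfolding basis0_def by (simp add: mult.assoc)
qed

lemma D_mult_basis0: "D * basis0 k l \<approx> basis0 k (l + 1)"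
proof -
  have "D * basis0 k l \<approx> z_ad * (D * (zpow A inv_a k * zpow D inv_d l))"
    unfolding basis0_def using qcommute_swap[OF z_ad_central'] by simp
  also have "\<dots> \<approx> z_ad * (zpow A inv_a k * (D * zpow D inv_d l))"
    using qcommute_swap[OF qcommute_D_zpow_a] by (simp add: mod_eq_mult_left)
  also have "\<dots> \<approx> zpow A inv_a k * (z_ad * (D * zpow D inv_d l))"
    using qcommute_swap[OF z_ad_central] by simp
  also have "\<dots> \<approx> zpow A inv_a k * (z_ad * zpow D inv_d (l + 1))"
    by (intro mod_eq_mult_left zpow_step_up_idem D_inv_d z_ad_idem)
  also have "\<dots> \<approx> basis0 k (l + 1)"
    unfolding basis0_def using qcommute_swap[OF z_ad_central'] by simp
  finally show ?thesis .
qed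

lemma z_ad_Di: "z_ad * (Di * r) \<approx> z_ad * (inv_a * (inv_d * r))"
proof -
  have "z_ad * (inv_a * (inv_d * r)) = z_ad * (Di * (D * (Di * (A * r))))"
    by (simp add: inv_a_def inv_d_def mult.assoc)
  also have "\<dots> \<approx> z_ad * (Di * (Di * (D * (A * r))))"
    using qcommute_swap[OF qcommute_D_Di] by (simp add: mod_eq_mult_left)
  also have "\<dots> \<approx> z_ad * (Di * (Di * (A * (D * r))))"
    using qcommute_swap[OF qcommute_D_A] by (simp add: mod_eq_mult_left)
  also have "\<dots> = z_ad * (Di * (z_ad * r))" by (simp add: z_ad_def mult.assoc)
  also have "\<dots> \<approx> (z_ad * z_ad) * (Di * r)"
    using qcommute_swap[OF z_ad_central'] by (simp add: mod_eq_mult_left mult.assoc)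
  also have "\<dots> \<approx> z_ad * (Di * r)" by (intro mod_eq_mult_right z_ad_idem)
  finally show ?thesis by (rule mod_eq_sym)
qed

lemma Di_mult_basis0: "Di * basis0 k l \<approx> basis0 (k - 1) (l - 1)"
proof -
  have "Di * basis0 k l \<approx> z_ad * (inv_a * (inv_d * (zpow A inv_a k * zpow D inv_d l)))"
    unfolding basis0_def using qcommute_swap[OF z_ad_central'] mod_eq_trans z_ad_Di by fastforce
  also have "\<dots> \<approx> (z_ad * (inv_a * zpow A inv_a k)) * (inv_d * zpow D inv_d l)"
    using qcommute_swap[OF qcommute_inv_d_zpow_a]
    by (simp add: mod_eq_mult_left mult.assoc)
  also have "\<dots> \<approx> (z_ad * zpow A inv_a (k - 1)) * (inv_d * zpow D inv_d l)"
    by (intro mod_eq_mult_right zpow_step_down_idem inv_a_A z_ad_idem)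
  also have "\<dots> \<approx> zpow A inv_a (k - 1) * (z_ad * (inv_d * zpow D inv_d l))"
    using qcommute_swap[OF z_ad_central] by (simp add: mult.assoc)
  also have "\<dots> \<approx> zpow A inv_a (k - 1) * (z_ad * zpow D inv_d (l - 1))"
    by (intro mod_eq_mult_left zpow_step_down_idem inv_d_D z_ad_idem)
  also have "\<dots> \<approx> basis0 (k - 1) (l - 1)"
    unfolding basis0_def using qcommute_swap[OF z_ad_central'] by simp
  finally show ?thesis .
qed

lemma B_mult_basis0: "B * basis0 k l \<approx> 0" and C_mult_basis0: "C * basis0 k l \<approx> 0"
  and A_mult_basis1: "A * basis1 k l \<approx> 0" and D_mult_basis1: "D * basis1 k l \<approx> 0"
  using qcommute_off_corner mod_eq_zero_in_context[of _ _ 1] unfolding basis0_def basis1_def qcommute_def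
  by simp_all

lemma C_mult_basis1: "C * basis1 k l \<approx> smul (if k < 0 then - q else 1) (basis1 (k + 1) l)"
proof -
  have "C * basis1 k l \<approx> (z_bc * (C * zpow C inv_c k)) * zpow B inv_b l"
    unfolding basis1_def using qcommute_swap[OF z_bc_central'] by (simp add: mult.assoc)
  also have "\<dots> \<approx> smul (if k < 0 then - q else 1) (z_bc * zpow C inv_c (k + 1)) * zpow B inv_b l"
    by (intro mod_eq_mult_right zpow_step_up C_inv_c z_bc_square)
  finally show ?thesis by (simp add: basis1_def mult.assoc)
qed

lemma B_mult_basis1:
  "B * basis1 k l \<approx> smul ((q^2) powi k * (if l < 0 then - q else 1)) (basis1 k (l + 1))"
proof -
  have "B * basis1 k l \<approx> z_bc * (B * (zpow C inv_c k * zpow B inv_b l))"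
    unfolding basis1_def using qcommute_swap[OF z_bc_central'] by simp
  also have "\<dots> \<approx> z_bc * smul ((q^2) powi k) (zpow C inv_c k * (B * zpow B inv_b l))"
    by (intro mod_eq_mult_left qcommute_swap qcommute_B_zpow_c)
  also have "\<dots> \<approx> smul ((q^2) powi k) (zpow C inv_c k * (z_bc * (B * zpow B inv_b l)))"
    using mod_eq_smul[OF qcommute_swap[OF z_bc_central]] by simp
  also have "\<dots> \<approx> smul ((q^2) powi k)
      (zpow C inv_c k * smul (if l < 0 then - q else 1) (z_bc * zpow B inv_b (l + 1)))"
    by (intro mod_eq_smul mod_eq_mult_left zpow_step_up B_inv_b z_bc_square)
  also have "\<dots> \<approx> smul ((q^2) powi k * (if l < 0 then - q else 1)) (basis1 k (l + 1))"
    unfolding basis1_def using mod_eq_smul[OF qcommute_swap[OF z_bc_central']] by simp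
  finally show ?thesis .
qed

lemma z_bc_Di: "z_bc * (Di * r) \<approx> smul (inverse (- q)) (z_bc * (inv_c * (inv_b * r)))"
proof -
  have "z_bc * (inv_c * (inv_b * r)) = (z_bc * z_bc) * (Di * r)"
    by (simp add: z_bc_def inv_c_def inv_b_def mult.assoc)
  also have "\<dots> \<approx> smul (- q) (z_bc * (Di * r))"
    using mod_eq_mult_right[OF z_bc_square] by simp
  finally have "smul (inverse (- q)) (z_bc * (inv_c * (inv_b * r)))
      \<approx> smul (inverse (- q)) (smul (- q) (z_bc * (Di * r)))"
    by (rule mod_eq_smul)
  also have "\<dots> = z_bc * (Di * r)" using q_nonzero by simp
  finally show ?thesis by (rule mod_eq_sym)
qed

lemma Di_mult_basis1:
  "Di * basis1 k l \<approx> smul (inverse (- q) * (inverse (q^2)) powi k * (if 0 < k then - q else 1)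
     * (if 0 < l then - q else 1)) (basis1 (k - 1) (l - 1))"
proof -
  let ?c = "inverse (- q) * (inverse (q^2)) powi k"
  let ?ck = "?c * (if 0 < k then - q else 1)"
  let ?el = "if 0 < l then - q else 1"
  have "Di * basis1 k l \<approx> z_bc * (Di * (zpow C inv_c k * zpow B inv_b l))"
    unfolding basis1_def using qcommute_swap[OF z_bc_central'] by simp
  also have "\<dots> \<approx> smul (inverse (- q)) (z_bc * (inv_c * (inv_b * (zpow C inv_c k * zpow B inv_b l))))"
    by (rule z_bc_Di)
  also have "\<dots> \<approx> smul (inverse (- q))
      (z_bc * (inv_c * smul ((inverse (q^2)) powi k) (zpow C inv_c k * (inv_b * zpow B inv_b l))))"
    by (intro mod_eq_smul mod_eq_mult_left qcommute_swap qcommute_inv_b_zpow_c)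
  also have "\<dots> = smul ?c ((z_bc * (inv_c * zpow C inv_c k)) * (inv_b * zpow B inv_b l))"
    by (simp add: mult.assoc)
  also have "\<dots> \<approx> smul ?c (smul (if 0 < k then - q else 1) (z_bc * zpow C inv_c (k - 1))
      * (inv_b * zpow B inv_b l))"
    by (intro mod_eq_smul mod_eq_mult_right zpow_step_down inv_c_C z_bc_square)
  also have "\<dots> \<approx> smul ?ck (zpow C inv_c (k - 1) * (z_bc * (inv_b * zpow B inv_b l)))"
    using mod_eq_smul[OF qcommute_swap[OF z_bc_central]] by (simp add: mult.assoc)
  also have "\<dots> \<approx> smul ?ck (zpow C inv_c (k - 1) * smul ?el (z_bc * zpow B inv_b (l - 1)))"
    by (intro mod_eq_smul mod_eq_mult_left zpow_step_down inv_b_B z_bc_square)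
  also have "\<dots> \<approx> smul (?ck * ?el) (basis1 (k - 1) (l - 1))"
    unfolding basis1_def using mod_eq_smul[OF qcommute_swap[OF z_bc_central']] by simp
  finally show ?thesis .
qed

end

section \<open>The bicrossproduct algebra\<close>

text \<open>sigma_q is cohomologous to the bicharacter q^{2lm}: its exponent is 2lm plus the coboundary
  of the cochain below.\<close>

definition sigma_cochain :: "int \<Rightarrow> int \<Rightarrow> int" where
  "sigma_cochain k l = (if k > l then 2 * k * l else if k = l then k * k else 0)"

definition sigma_exponent :: "int \<Rightarrow> int \<Rightarrow> int \<Rightarrow> int \<Rightarrow> int" where
  "sigma_exponent k l m n =
    (if k > l then
       (if m > n then -2*k*n
        else if m = n then -m*(2*k+m)
        else if k + m > l + n then -2*n*(k+m)
        else if k + m = l + n then (k+m)*(2*l-k-m)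
        else 2*l*(k+m))
     else if k = l then
       (if m > n then -k*(k+2*n)
        else if m = n then 0
        else k*(k+2*m))
     else
       (if m > n then
          (if k + m > l + n then -2*k*(l+n)
           else if k + m = l + n then (l+n)*(l+n-2*k)
           else 2*m*(l+n))
        else if m = n then m*(m+2*l)
        else 2*l*m))"

lemma sigma_q_eq_power: "sigma_q q k l m n = q powi sigma_exponent k l m n"
  unfolding sigma_q_def sigma_exponent_def by (simp split: if_split)

lemma sigma_exponent_coboundary:
  "sigma_exponent k l m n = 2 * l * m + sigma_cochain k l + sigma_cochain m n - sigma_cochain (k + m) (l + n)"
proof -
  have solve_k: "(k::int) + m = l + n \<Longrightarrow> k = l + n - m" for k l m n by simp
  show ?thesis unfolding sigma_exponent_def sigma_cochain_def by (auto simp: algebra_simps dest!: solve_k)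
qed

lemma sigma_cochain_zero [simp]: "sigma_cochain 0 l = 0" "sigma_cochain k 0 = 0"
  and sigma_cochain_minus_one [simp]: "sigma_cochain (-1) (-1) = 1"
  by (simp_all add: sigma_cochain_def)

lemma sigma_cochain_swap: "sigma_cochain k l + sigma_cochain l k = 2 * k * l"
  by (simp add: sigma_cochain_def)

definition bcp_cocycle :: "complex \<Rightarrow> z2 \<Rightarrow> int \<Rightarrow> int \<Rightarrow> int \<Rightarrow> int \<Rightarrow> complex" where
  "bcp_cocycle q i k l m n = (if i = Z0 then 1
     else q powi (2 * l * m + sigma_cochain k l + sigma_cochain m n - sigma_cochain (k + m) (l + n)))"

lemma bcp_cocycle_assoc:
  "q \<noteq> 0 \<Longrightarrow> bcp_cocycle q i k l m n * bcp_cocycle q i (k + m) (l + n) a b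
     = bcp_cocycle q i m n a b * bcp_cocycle q i k l (m + a) (n + b)"
  by (cases "i = Z0") (simp_all add: bcp_cocycle_def power_int_add[symmetric] algebra_simps)

definition bcp_mul_term :: "complex \<Rightarrow> z2 \<times> int \<times> int \<Rightarrow> z2 \<times> int \<times> int \<Rightarrow> complex \<Rightarrow> complex \<Rightarrow> bcp" where
  "bcp_mul_term q a b c d = (case (a, b) of ((i, h), (j, g)) \<Rightarrow>
     (\<Sum>e\<in>{Z0, Z1}. Poly_Mapping.single (e, (fst h + fst g, snd h + snd g))
        (c * d * (zdelta i e * zdelta j e * sigma q h g e))))"

lemma bcp_mul_pm_sum: "bcp_mul q x y = pm_sum (\<lambda>a c. pm_sum (\<lambda>b d. bcp_mul_term q a b c d) y) x"
  by (simp add: bcp_mul_def pm_sum_def bcp_mul_term_def)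

lemma bcp_mul_term_single: "bcp_mul_term q (i, k, l) (j, m, n) c d =
   (if i = j then Poly_Mapping.single (i, k + m, l + n) (c * d * bcp_cocycle q i k l m n) else 0)"
  by (cases i; cases j)
     (simp_all add: bcp_mul_term_def zdelta_def sigma_def sigma_q_eq_power sigma_exponent_coboundary
       bcp_cocycle_def)

lemma bcp_mul_term_zero: "bcp_mul_term q a b 0 d = 0" "bcp_mul_term q a b c 0 = 0"
  by (simp_all add: bcp_mul_term_def split: prod.split)

lemma bcp_mul_term_add:
  "bcp_mul_term q a b (c + c') d = bcp_mul_term q a b c d + bcp_mul_term q a b c' d"
  "bcp_mul_term q a b c (d + d') = bcp_mul_term q a b c d + bcp_mul_term q a b c d'"
  by (simp_all add: bcp_mul_term_def distrib_left distrib_right single_add sum.distrib split: prod.split)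

lemma bcp_mul_add_left: "bcp_mul q (x + x') y = bcp_mul q x y + bcp_mul q x' y"
  unfolding bcp_mul_pm_sum
proof (rule pm_sum_add)
  show "pm_sum (\<lambda>b d. bcp_mul_term q a b 0 d) y = 0" for a
    by (simp add: pm_sum_def bcp_mul_term_zero)
  show "pm_sum (\<lambda>b d'. bcp_mul_term q a b (c + d) d') y
      = pm_sum (\<lambda>b d. bcp_mul_term q a b c d) y + pm_sum (\<lambda>b d'. bcp_mul_term q a b d d') y" for a c d
    by (simp add: bcp_mul_term_add pm_sum_plus_fun)
qed

lemma bcp_mul_add_right: "bcp_mul q x (y + y') = bcp_mul q x y + bcp_mul q x y'"
proof -
  have "pm_sum (\<lambda>b d. bcp_mul_term q a b c d) (y + y')
      = pm_sum (\<lambda>b d. bcp_mul_term q a b c d) y + pm_sum (\<lambda>b d. bcp_mul_term q a b c d) y'" for a c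
    by (rule pm_sum_add) (simp_all add: bcp_mul_term_zero bcp_mul_term_add)
  then show ?thesis unfolding bcp_mul_pm_sum by (simp only: pm_sum_plus_fun)
qed

interpretation bcp_mul_left: additive "\<lambda>x. bcp_mul q x y" for q y
  by unfold_locales (rule bcp_mul_add_left)

interpretation bcp_mul_right: additive "\<lambda>y. bcp_mul q x y" for q x
  by unfold_locales (rule bcp_mul_add_right)

lemma bcp_mul_zero [simp]: "bcp_mul q 0 y = 0" "bcp_mul q x 0 = 0"
  by (simp_all add: bcp_mul_def)

lemma bcp_mul_single: "bcp_mul q (Poly_Mapping.single (i, k, l) c) (Poly_Mapping.single (j, m, n) d) =
   (if i = j then Poly_Mapping.single (i, k + m, l + n) (c * d * bcp_cocycle q i k l m n) else 0)"
  unfolding bcp_mul_pm_sum by (simp add: pm_sum_single bcp_mul_term_zero pm_sum_def bcp_mul_term_single)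

lemma bcp_mul_assoc: "q \<noteq> 0 \<Longrightarrow> bcp_mul q (bcp_mul q x y) z = bcp_mul q x (bcp_mul q y z)"
proof (induction x rule: poly_mapping_induct_triple)
  case (single i k l c)
  then show ?case
  proof (induction y rule: poly_mapping_induct_triple)
    case (single j m n d)
    then show ?case
    proof (induction z rule: poly_mapping_induct_triple)
      case (single t u v f)
      then show ?case using bcp_cocycle_assoc[of q t k l m n u v]
        by (simp add: bcp_mul_single ac_simps)
    qed (simp_all add: bcp_mul_add_left bcp_mul_add_right)
  qed (simp_all add: bcp_mul_add_left bcp_mul_add_right)
qed (simp_all add: bcp_mul_add_left bcp_mul_add_right)

lemma bcp_mul_one_left: "bcp_mul q bcp_one x = x"
proof (induction x rule: poly_mapping_induct_triple)
  case (single j m n c)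
  show ?case by (cases j) (simp_all add: bcp_one_def bcp_mul_add_left bcp_mul_single bcp_cocycle_def)
qed (simp_all add: bcp_mul_add_right)

lemma bcp_mul_one_right: "bcp_mul q x bcp_one = x"
proof (induction x rule: poly_mapping_induct_triple)
  case (single j m n c)
  show ?case by (cases j) (simp_all add: bcp_one_def bcp_mul_add_right bcp_mul_single bcp_cocycle_def)
qed (simp_all add: bcp_mul_add_left)

definition bcp_scalar :: "complex \<Rightarrow> bcp" where
  "bcp_scalar c = Poly_Mapping.single (Z0, 0, 0) c + Poly_Mapping.single (Z1, 0, 0) c"

lemma bcp_scalar_mult_single:
  "bcp_mul q (bcp_scalar c) (Poly_Mapping.single (j, m, n) d) = Poly_Mapping.single (j, m, n) (c * d)"
  "bcp_mul q (Poly_Mapping.single (j, m, n) d) (bcp_scalar c) = Poly_Mapping.single (j, m, n) (c * d)"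
  by (cases j; simp add: bcp_scalar_def bcp_mul_add_left bcp_mul_add_right bcp_mul_single
      bcp_cocycle_def mult.commute)+

lemma bcp_scalar_commute: "bcp_mul q (bcp_scalar c) x = bcp_mul q x (bcp_scalar c)"
  by (induction x rule: poly_mapping_induct_triple)
     (simp_all add: bcp_scalar_mult_single bcp_mul_add_left bcp_mul_add_right)

lemma bcp_scalar_one: "bcp_scalar 1 = bcp_one"
  by (simp add: bcp_scalar_def bcp_one_def)

lemma bcp_scalar_mult: "bcp_mul q (bcp_scalar c) (bcp_scalar d) = bcp_scalar (c * d)"
  by (simp add: bcp_scalar_def bcp_mul_add_right bcp_scalar_mult_single(1)[unfolded bcp_scalar_def])

lemma bcp_scalar_add: "bcp_scalar (c + d) = bcp_scalar c + bcp_scalar d"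
  by (simp add: bcp_scalar_def single_add)

lemma bcp_scalar_zero [simp]: "bcp_scalar 0 = 0"
  by (simp add: bcp_scalar_def)

definition bcp_gen :: "gen \<Rightarrow> bcp" where
  "bcp_gen g = (case g of
      Ga \<Rightarrow> Poly_Mapping.single (Z0, 1, 0) 1
    | Gb \<Rightarrow> Poly_Mapping.single (Z1, 0, 1) 1
    | Gc \<Rightarrow> Poly_Mapping.single (Z1, 1, 0) 1
    | Gd \<Rightarrow> Poly_Mapping.single (Z0, 0, 1) 1
    | GDi \<Rightarrow> Poly_Mapping.single (Z0, -1, -1) 1 + Poly_Mapping.single (Z1, -1, -1) (-1))"

definition bcp_word :: "complex \<Rightarrow> gen list \<Rightarrow> bcp" where
  "bcp_word q w = foldr (\<lambda>g x. bcp_mul q (bcp_gen g) x) w bcp_one"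

definition to_bcp :: "complex \<Rightarrow> gen free_alg \<Rightarrow> bcp" where
  "to_bcp q p = pm_sum (\<lambda>w c. bcp_mul q (bcp_scalar c) (bcp_word q w)) p"

lemma to_bcp_add: "to_bcp q (x + y) = to_bcp q x + to_bcp q y"
  unfolding to_bcp_def by (rule pm_sum_add) (simp_all add: bcp_scalar_add bcp_mul_add_left)

interpretation to_bcp: additive "to_bcp q" for q
  by unfold_locales (rule to_bcp_add)

lemma to_bcp_single: "to_bcp q (Poly_Mapping.single w c) = bcp_mul q (bcp_scalar c) (bcp_word q w)"
  unfolding to_bcp_def by (rule pm_sum_single) simp

lemma to_bcp_zero [simp]: "to_bcp q 0 = 0"
  by (simp add: to_bcp_def)

context dt_quotient
begin

abbreviation bm where "bm \<equiv> bcp_mul q"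

lemma bm_assoc: "bm (bm x y) z = bm x (bm y z)"
  by (rule bcp_mul_assoc[OF q_nonzero])

lemma bcp_word_append: "bcp_word q (v @ w) = bm (bcp_word q v) (bcp_word q w)"
  by (induction v) (simp_all add: bcp_word_def bcp_mul_one_left bm_assoc)

lemma bcp_scalar_pull: "bm x (bm (bcp_scalar c) y) = bm (bcp_scalar c) (bm x y)"
  by (metis bm_assoc bcp_scalar_commute)

lemma to_bcp_mult: "to_bcp q (x * y) = bm (to_bcp q x) (to_bcp q y)"
proof (induction x rule: poly_mapping_induct)
  case (single v a)
  show ?case
  proof (induction y rule: poly_mapping_induct)
    case (single w b)
    have "to_bcp q (Poly_Mapping.single v a * Poly_Mapping.single w b)
        = bm (bcp_scalar a) (bm (bcp_scalar b) (bm (bcp_word q v) (bcp_word q w)))"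
      by (simp add: mult_single plus_list_def to_bcp_single bcp_scalar_mult[of q, symmetric] bcp_word_append bm_assoc)
    also have "bm (bcp_scalar b) (bm (bcp_word q v) (bcp_word q w)) = bm (bcp_word q v) (bm (bcp_scalar b) (bcp_word q w))"
      by (rule bcp_scalar_pull[symmetric])
    finally show ?case by (simp add: to_bcp_single bm_assoc)
  qed (simp_all add: to_bcp_add bcp_mul_add_right distrib_left)
qed (simp_all add: to_bcp_add bcp_mul_add_left distrib_right)

lemma bcp_word_Nil: "bcp_word q 0 = bcp_one"
  by (simp add: zero_list_def bcp_word_def)

lemma to_bcp_one: "to_bcp q 1 = bcp_one"
  using to_bcp_single[of q 0 1] unfolding single_one
  by (simp add: bcp_word_Nil bcp_scalar_one bcp_mul_one_left)

lemma to_bcp_smul: "to_bcp q (smul c x) = bm (bcp_scalar c) (to_bcp q x)"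
  by (simp add: smul_def to_bcp_mult to_bcp_single bcp_word_Nil bcp_mul_one_right)

lemma to_bcp_fgen: "to_bcp q (fgen g) = bcp_gen g"
  by (simp add: fgen_def to_bcp_single bcp_word_def bcp_mul_one_right bcp_scalar_one bcp_mul_one_left)

lemma to_bcp_letters:
  "to_bcp q A = Poly_Mapping.single (Z0, 1, 0) 1" "to_bcp q B = Poly_Mapping.single (Z1, 0, 1) 1"
  "to_bcp q C = Poly_Mapping.single (Z1, 1, 0) 1" "to_bcp q D = Poly_Mapping.single (Z0, 0, 1) 1"
  "to_bcp q Di = Poly_Mapping.single (Z0, -1, -1) 1 + Poly_Mapping.single (Z1, -1, -1) (-1)"
  by (simp_all add: gA_def gB_def gC_def gD_def gDi_def to_bcp_fgen bcp_gen_def)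

lemmas to_bcp_simps = to_bcp_mult to_bcp.diff to_bcp_smul to_bcp_letters to_bcp_one
  bcp_mul_add_left bcp_mul_add_right bcp_mul_single bcp_scalar_mult_single bcp_cocycle_def
  sigma_cochain_def bcp_mul_left.minus bcp_mul_right.minus bcp_mul_left.diff bcp_mul_right.diff

lemma to_bcp_rels: "r \<in> rels_DT q \<Longrightarrow> to_bcp q r = 0"
proof -
  have detq: "to_bcp q (detq q) = Poly_Mapping.single (Z0, 1, 1) 1 - Poly_Mapping.single (Z1, 1, 1) 1"
    using q_nonzero by (simp add: detq_eq to_bcp_simps)
  show "r \<in> rels_DT q \<Longrightarrow> to_bcp q r = 0"
    unfolding rels_DT_eq using q_nonzero
    by (elim UnE insertE emptyE)
       (simp_all add: to_bcp_simps detq bcp_one_def power2_eq_square mult.assoc single_uminus[symmetric])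
qed

lemma to_bcp_ideal: "x \<in> ideal_DT q \<Longrightarrow> to_bcp q x = 0"
  unfolding ideal_DT_def
  by (induction rule: gen_ideal.induct) (simp_all add: to_bcp_rels to_bcp_add fmul_eq_times to_bcp_mult)

end

section \<open>The isomorphism\<close>

text \<open>The scale makes to_bcp send the image of a basis vector back to that vector: the monomial
  basis1 k l is mapped to q^{-p(k,l)} (-q)^{1 + max(-k,0) + max(-l,0)} times delta_Z1 \<otimes> u^k v^l,
  where p is sigma_cochain.\<close>

definition basis1_scale :: "complex \<Rightarrow> int \<Rightarrow> int \<Rightarrow> complex" where
  "basis1_scale q k l = q powi sigma_cochain k l * (- q) powi (- (1 + max (- k) 0 + max (- l) 0))"

definition dt_basis :: "complex \<Rightarrow> z2 \<times> int \<times> int \<Rightarrow> gen free_alg" where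
  "dt_basis q e = (case e of (Z0, k, l) \<Rightarrow> basis0 k l | (Z1, k, l) \<Rightarrow> smul (basis1_scale q k l) (basis1 k l))"

lemma dt_basis_simps [simp]:
  "dt_basis q (Z0, k, l) = basis0 k l" "dt_basis q (Z1, k, l) = smul (basis1_scale q k l) (basis1 k l)"
  by (simp_all add: dt_basis_def)

lemma lin_ext_pm_sum: "lin_ext f x = pm_sum (\<lambda>a c. smul c (f a)) x"
  by (simp add: lin_ext_def pm_sum_def fmul_eq_times fscal_eq_single smul_def)

lemma lin_ext_add: "lin_ext f (x + y) = lin_ext f x + lin_ext f y"
  unfolding lin_ext_pm_sum by (rule pm_sum_add) (simp_all add: smul_add_left)

lemma lin_ext_single: "lin_ext f (Poly_Mapping.single a c) = smul c (f a)"
  unfolding lin_ext_pm_sum by (rule pm_sum_single) simp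

lemma lin_ext_zero [simp]: "lin_ext f 0 = 0"
  by (simp add: lin_ext_def)

lemma lin_ext_bcp_scalar: "lin_ext f (bcp_mul q (bcp_scalar c) x) = smul c (lin_ext f x)"
  by (induction x rule: poly_mapping_induct_triple)
     (simp_all add: bcp_scalar_mult_single lin_ext_single mult.commute bcp_mul_add_right lin_ext_add smul_add_right)

context dt_quotient
begin

abbreviation Phi where "Phi \<equiv> lin_ext (dt_basis q)"

text \<open>All scalars in the proof are of the form q^a (-q)^b.\<close>

definition qmon :: "int \<Rightarrow> int \<Rightarrow> complex" where "qmon a b = q powi a * (- q) powi b"

lemma qmon_mult: "qmon a b * qmon c d = qmon (a + c) (b + d)"
  using q_nonzero by (simp add: qmon_def power_int_add mult_ac)

lemma qmon_cong: "a = c \<Longrightarrow> b = d \<Longrightarrow> qmon a b = qmon c d"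
  by simp

lemma qmon_even: "qmon a (2 * b) = qmon (a + 2 * b) 0"
  using q_nonzero by (simp add: qmon_def power_int_mult power_int_add)

lemma qmon_forms:
  "basis1_scale q k l = qmon (sigma_cochain k l) (- (1 + max (- k) 0 + max (- l) 0))"
  "bcp_cocycle q Z1 k l m n = qmon (2 * l * m + sigma_cochain k l + sigma_cochain m n - sigma_cochain (k + m) (l + n)) 0"
  "(if P then - q else 1) = qmon 0 (if P then 1 else 0)"
  "(q ^ 2) powi k = qmon (2 * k) 0"
  "(inverse (q ^ 2)) powi k = qmon (- 2 * k) 0"
  "inverse (- q) = qmon 0 (-1)"
  "(-1 :: complex) = qmon (-1) 1"
proof -
  have q2: "(q ^ 2) powi k = q powi (2 * k)" for k by (simp add: power_int_mult)
  show "(q ^ 2) powi k = qmon (2 * k) 0" "(inverse (q ^ 2)) powi k = qmon (- 2 * k) 0"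
    using q2[of "- k"] by (simp_all add: q2 qmon_def power_int_minus power_int_inverse)
qed (use q_nonzero in \<open>simp_all add: basis1_scale_def bcp_cocycle_def qmon_def power_int_minus\<close>)

lemma basis1_scale_mult_B: "basis1_scale q k l * ((q^2) powi k * (if l < 0 then - q else 1))
    = bcp_cocycle q Z1 0 1 k l * basis1_scale q k (1 + l)"
  and basis1_scale_mult_C: "basis1_scale q k l * (if k < 0 then - q else 1)
    = bcp_cocycle q Z1 1 0 k l * basis1_scale q (1 + k) l"
  and basis1_scale_mult_Di: "basis1_scale q k l * (inverse (- q) * (inverse (q^2)) powi k
      * (if 0 < k then - q else 1) * (if 0 < l then - q else 1))
    = (-1) * bcp_cocycle q Z1 (-1) (-1) k l * basis1_scale q (-1 + k) (-1 + l)"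
  by (simp only: qmon_forms qmon_mult; rule qmon_cong; simp add: max_def)+

lemma letter_mult_dt_basis:
  "fgen g * dt_basis q (i, k, l) \<approx> Phi (bm (bcp_gen g) (Poly_Mapping.single (i, k, l) 1))"
proof (cases i)
  case Z0
  then show ?thesis
    using A_mult_basis0[of k l] D_mult_basis0[of k l] Di_mult_basis0[of k l]
      B_mult_basis0[of k l] C_mult_basis0[of k l]
    by (cases g) (simp_all add: gA_def[symmetric] gB_def[symmetric] gC_def[symmetric] gD_def[symmetric]
        gDi_def[symmetric] bcp_gen_def bcp_mul_single bcp_mul_add_left bcp_cocycle_def lin_ext_single
        lin_ext_add add.commute)
next
  case Z1
  have "A * dt_basis q (i, k, l) \<approx> 0" "D * dt_basis q (i, k, l) \<approx> 0"
    using Z1 mod_eq_smul[OF A_mult_basis1[of k l]] mod_eq_smul[OF D_mult_basis1[of k l]] by simp_all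
  moreover have "B * dt_basis q (i, k, l)
      \<approx> smul (bcp_cocycle q Z1 0 1 k l * basis1_scale q k (1 + l)) (basis1 k (1 + l))"
    using Z1 mod_eq_smul[OF B_mult_basis1[of k l], of "basis1_scale q k l"] by (simp add: basis1_scale_mult_B add.commute)
  moreover have "C * dt_basis q (i, k, l)
      \<approx> smul (bcp_cocycle q Z1 1 0 k l * basis1_scale q (1 + k) l) (basis1 (1 + k) l)"
    using Z1 mod_eq_smul[OF C_mult_basis1[of k l], of "basis1_scale q k l"] by (simp add: basis1_scale_mult_C add.commute)
  moreover have "Di * dt_basis q (i, k, l)
      \<approx> smul (- 1 * bcp_cocycle q Z1 (-1) (-1) k l * basis1_scale q (-1 + k) (-1 + l)) (basis1 (-1 + k) (-1 + l))"
    using Z1 mod_eq_smul[OF Di_mult_basis1[of k l], of "basis1_scale q k l"] by (simp add: basis1_scale_mult_Di[simplified])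
  ultimately show ?thesis
    using Z1 by (cases g) (simp_all add: gA_def[symmetric] gB_def[symmetric] gC_def[symmetric]
        gD_def[symmetric] gDi_def[symmetric] bcp_gen_def bcp_mul_single bcp_mul_add_left lin_ext_single)
qed

lemma letter_mult_Phi: "fgen g * Phi x \<approx> Phi (bm (bcp_gen g) x)"
proof (induction x rule: poly_mapping_induct_triple)
  case (single i k l c)
  have "fgen g * Phi (Poly_Mapping.single (i, k, l) c) = smul c (fgen g * dt_basis q (i, k, l))"
    by (simp add: lin_ext_single)
  also have "\<dots> \<approx> Phi (bm (bcp_scalar c) (bm (bcp_gen g) (Poly_Mapping.single (i, k, l) 1)))"
    by (simp add: lin_ext_bcp_scalar mod_eq_smul letter_mult_dt_basis)
  also have "bm (bcp_scalar c) (bm (bcp_gen g) (Poly_Mapping.single (i, k, l) 1))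
      = bm (bcp_gen g) (Poly_Mapping.single (i, k, l) c)"
    by (simp add: bcp_scalar_pull[symmetric] bcp_scalar_mult_single)
  finally show ?case .
qed (simp_all add: lin_ext_add bcp_mul_add_right distrib_left mod_eq_add)

lemma mult_Phi: "p * Phi x \<approx> Phi (bm (to_bcp q p) x)"
proof (induction p rule: poly_mapping_induct)
  case (single w c)
  have word: "Poly_Mapping.single w 1 * Phi x \<approx> Phi (bm (bcp_word q w) x)" for x
  proof (induction w arbitrary: x)
    case Nil
    have "Poly_Mapping.single [] 1 = (1 :: gen free_alg)" by (metis single_one zero_list_def)
    then show ?case by (simp add: bcp_word_def bcp_mul_one_left)
  next
    case (Cons g w)
    have "Poly_Mapping.single (g # w) 1 * Phi x = fgen g * (Poly_Mapping.single w 1 * Phi x)"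
      by (simp add: fgen_mult_single[symmetric] mult.assoc)
    also have "\<dots> \<approx> Phi (bm (bcp_gen g) (bm (bcp_word q w) x))"
      using mod_eq_mult_left[OF Cons] letter_mult_Phi mod_eq_trans by blast
    finally show ?case by (simp add: bcp_word_def bm_assoc)
  qed
  have "Poly_Mapping.single w c * Phi x = smul c (Poly_Mapping.single w 1 * Phi x)"
    by (subst single_eq_smul) simp
  also have "\<dots> \<approx> smul c (Phi (bm (bcp_word q w) x))" by (intro mod_eq_smul word)
  also have "\<dots> = Phi (bm (to_bcp q (Poly_Mapping.single w c)) x)"
    by (simp add: lin_ext_bcp_scalar to_bcp_single bm_assoc)
  finally show ?case .
qed (simp_all add: lin_ext_add bcp_mul_add_left to_bcp_add distrib_right mod_eq_add)

lemma to_bcp_corner_elements: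
  "to_bcp q z_ad = Poly_Mapping.single (Z0, 0, 0) 1"
  "to_bcp q z_bc = Poly_Mapping.single (Z1, 0, 0) (- q)"
  "to_bcp q inv_a = Poly_Mapping.single (Z0, -1, 0) 1"
  "to_bcp q inv_d = Poly_Mapping.single (Z0, 0, -1) 1"
  "to_bcp q inv_c = Poly_Mapping.single (Z1, -1, 0) (- q)"
  "to_bcp q inv_b = Poly_Mapping.single (Z1, 0, -1) (- q)"
  by (simp_all add: z_ad_def z_bc_def inv_a_def inv_d_def inv_c_def inv_b_def to_bcp_simps)

text \<open>Along a coordinate axis the cocycle is trivial.\<close>

lemma to_bcp_power_axis:
  assumes x: "to_bcp q x = Poly_Mapping.single (i, a, b) s" and axis: "a = 0 \<or> b = 0"
  shows "bm (Poly_Mapping.single (i, 0, 0) 1) (to_bcp q (x ^ n))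
    = Poly_Mapping.single (i, int n * a, int n * b) (s ^ n)"
proof (induction n)
  case 0 then show ?case by (simp add: to_bcp_one bcp_mul_one_right)
next
  case (Suc n)
  let ?e = "Poly_Mapping.single (i, 0, 0) (1::complex)" and ?x = "Poly_Mapping.single (i, a, b) s"
  have "bm ?e ?x = ?x" "bm ?x ?e = ?x"
    by (simp_all add: bcp_mul_single bcp_cocycle_def)
  then have "bm ?e (to_bcp q (x ^ Suc n)) = bm ?x (bm ?e (to_bcp q (x ^ n)))"
    by (metis x to_bcp_mult power_Suc bm_assoc)
  also have "\<dots> = Poly_Mapping.single (i, int (Suc n) * a, int (Suc n) * b) (s ^ Suc n)"
    using axis by (auto simp: Suc bcp_mul_single bcp_cocycle_def algebra_simps)
  finally show ?case .
qed

lemma to_bcp_zpow_axis: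
  assumes "to_bcp q x = Poly_Mapping.single (i, a, b) s" "to_bcp q xi = Poly_Mapping.single (i, - a, - b) s'"
    and "a = 0 \<or> b = 0"
  shows "bm (Poly_Mapping.single (i, 0, 0) 1) (to_bcp q (zpow x xi k))
    = Poly_Mapping.single (i, k * a, k * b) (if 0 \<le> k then s ^ nat k else s' ^ nat (- k))"
  using to_bcp_power_axis[OF assms(1,3), of "nat k"] to_bcp_power_axis[OF assms(2), of "nat (- k)"] assms(3)
  by (auto simp: zpow_def)

lemma to_bcp_basis0: "to_bcp q (basis0 k l) = Poly_Mapping.single (Z0, k, l) 1"
proof -
  let ?e = "Poly_Mapping.single (Z0, 0, 0) (1::complex)"
  have a: "bm ?e (to_bcp q (zpow A inv_a k)) = Poly_Mapping.single (Z0, k, 0) 1"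
    using to_bcp_zpow_axis[of A Z0 1 0 1 inv_a 1 k] by (simp add: to_bcp_letters to_bcp_corner_elements)
  have d: "bm ?e (to_bcp q (zpow D inv_d l)) = Poly_Mapping.single (Z0, 0, l) 1"
    using to_bcp_zpow_axis[of D Z0 0 1 1 inv_d 1 l] by (simp add: to_bcp_letters to_bcp_corner_elements)
  have e: "bm (Poly_Mapping.single (Z0, k, 0) 1) ?e = Poly_Mapping.single (Z0, k, 0) 1"
    by (simp add: bcp_mul_single bcp_cocycle_def)
  have "to_bcp q (basis0 k l) = bm (bm ?e (to_bcp q (zpow A inv_a k))) (to_bcp q (zpow D inv_d l))"
    by (simp add: basis0_def to_bcp_mult to_bcp_corner_elements bm_assoc)
  also have "\<dots> = bm (bm (Poly_Mapping.single (Z0, k, 0) 1) ?e) (to_bcp q (zpow D inv_d l))"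
    by (simp only: a e)
  also have "\<dots> = Poly_Mapping.single (Z0, k, l) 1"
    by (simp only: bm_assoc d) (simp add: bcp_mul_single bcp_cocycle_def)
  finally show ?thesis .
qed

lemma to_bcp_basis1:
  "to_bcp q (basis1 k l) = Poly_Mapping.single (Z1, k, l) (qmon (- sigma_cochain k l) (1 + max (- k) 0 + max (- l) 0))"
proof -
  let ?e = "Poly_Mapping.single (Z1, 0, 0) (1::complex)"
  define \<alpha> where "\<alpha> = (if 0 \<le> k then 1 else (- q) ^ nat (- k))"
  define \<beta> where "\<beta> = (if 0 \<le> l then 1 else (- q) ^ nat (- l))"
  have c: "bm ?e (to_bcp q (zpow C inv_c k)) = Poly_Mapping.single (Z1, k, 0) \<alpha>"
    using to_bcp_zpow_axis[of C Z1 1 0 1 inv_c "- q" k] by (simp add: to_bcp_letters to_bcp_corner_elements \<alpha>_def)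
  have b: "bm ?e (to_bcp q (zpow B inv_b l)) = Poly_Mapping.single (Z1, 0, l) \<beta>"
    using to_bcp_zpow_axis[of B Z1 0 1 1 inv_b "- q" l] by (simp add: to_bcp_letters to_bcp_corner_elements \<beta>_def)
  have z: "to_bcp q z_bc = bm (bcp_scalar (- q)) ?e"
    by (simp add: to_bcp_corner_elements bcp_scalar_mult_single)
  have e: "bm (Poly_Mapping.single (Z1, k, 0) \<alpha>) ?e = Poly_Mapping.single (Z1, k, 0) \<alpha>"
    by (simp add: bcp_mul_single bcp_cocycle_def)
  have "to_bcp q (basis1 k l) = bm (bcp_scalar (- q)) (bm (bm ?e (to_bcp q (zpow C inv_c k))) (to_bcp q (zpow B inv_b l)))"
    by (simp only: basis1_def to_bcp_mult z bm_assoc)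
  also have "\<dots> = bm (bcp_scalar (- q)) (bm (bm (Poly_Mapping.single (Z1, k, 0) \<alpha>) ?e) (to_bcp q (zpow B inv_b l)))"
    by (simp only: c e)
  also have "\<dots> = Poly_Mapping.single (Z1, k, l) (- q * (\<alpha> * \<beta> * bcp_cocycle q Z1 k 0 0 l))"
    by (simp only: bm_assoc b) (simp add: bcp_mul_single bcp_scalar_mult_single)
  also have "- q * (\<alpha> * \<beta> * bcp_cocycle q Z1 k 0 0 l) = qmon (- sigma_cochain k l) (1 + max (- k) 0 + max (- l) 0)"
  proof -
    have axis: "(if 0 \<le> k then 1 else (- q) ^ nat (- k)) = qmon 0 (max (- k) 0)" for k
      by (simp add: qmon_def power_int_def max_def)
    have minus_q: "- q = qmon 0 1" by (simp add: qmon_def)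
    show ?thesis unfolding \<alpha>_def \<beta>_def axis unfolding qmon_forms(2) minus_q qmon_mult
      by (intro qmon_cong) simp_all
  qed
  finally show ?thesis .
qed

lemma to_bcp_dt_basis: "to_bcp q (dt_basis q e) = Poly_Mapping.single e 1"
proof -
  obtain i k l where e: "e = (i, k, l)" by (cases e) auto
  have "basis1_scale q k l * qmon (- sigma_cochain k l) (1 + max (- k) 0 + max (- l) 0) = 1"
    by (simp only: qmon_forms qmon_mult) (simp add: qmon_def)
  then show ?thesis
    by (cases i) (simp_all add: e to_bcp_basis0 to_bcp_smul to_bcp_basis1 bcp_scalar_mult_single)
qed

lemma to_bcp_Phi: "to_bcp q (Phi x) = x"
  by (induction x rule: poly_mapping_induct_triple)
     (simp_all add: lin_ext_single lin_ext_add to_bcp_add to_bcp_smul to_bcp_dt_basis bcp_scalar_mult_single)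

lemma Phi_one: "Phi bcp_one \<approx> 1"
proof -
  have "basis1_scale q 0 0 = - inverse q" by (simp add: basis1_scale_def power_int_minus)
  then have "Phi bcp_one = z_ad - smul (inverse q) z_bc"
    by (simp add: bcp_one_def lin_ext_add lin_ext_single basis0_def basis1_def smul_minus_left)
  then show ?thesis using z_ad_minus_z_bc by simp
qed

lemma Phi_surjective: "p \<approx> Phi (to_bcp q p)"
  using mult_Phi[of p bcp_one] mod_eq_mult_left[OF Phi_one, of p]
  by (simp add: bcp_mul_one_right) (meson mod_eq_sym mod_eq_trans)

lemma Phi_injective: "Phi x \<in> ideal_DT q \<Longrightarrow> x = 0"
  using to_bcp_ideal[of "Phi x"] to_bcp_Phi[of x] by simp

lemma Phi_mult: "Phi (bm x y) \<approx> Phi x * Phi y"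
  using mult_Phi[of "Phi x" y] by (simp add: to_bcp_Phi mod_eq_sym)

end

lemma bcp_counit_pm_sum: "bcp_counit x = pm_sum (\<lambda>a c. case a of (i, h) \<Rightarrow> c * zdelta i Z0 * 1) x"
  by (simp add: bcp_counit_def pm_sum_def)

lemma bcp_counit_zero [simp]: "bcp_counit 0 = 0"
  by (simp add: bcp_counit_def)

lemma bcp_counit_add: "bcp_counit (x + y) = bcp_counit x + bcp_counit y"
  unfolding bcp_counit_pm_sum by (rule pm_sum_add) (auto simp: distrib_right split: prod.split)

lemma bcp_counit_single: "bcp_counit (Poly_Mapping.single (i, h) c) = c * zdelta i Z0"
  unfolding bcp_counit_pm_sum by (subst pm_sum_single) (auto split: prod.split)

lemma fcounit_zpow: "fcounit eg x = 1 \<Longrightarrow> fcounit eg xi = 1 \<Longrightarrow> fcounit eg (zpow x xi k) = 1"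
  by (simp add: zpow_def fcounit_power)

lemma fcounit_basis: "fcounit eps_gen (basis0 k l) = 1" "fcounit eps_gen (basis1 k l) = 0"
  by (simp_all add: basis0_def basis1_def z_ad_def z_bc_def inv_a_def inv_d_def fcounit_mult
      fcounit_zpow gA_def gB_def gD_def gDi_def fcounit_fgen)

lemma fcounit_lin_ext_dt_basis: "fcounit eps_gen (lin_ext (dt_basis q) x) = bcp_counit x"
proof (induction x rule: poly_mapping_induct_triple)
  case (single i k l c)
  show ?case
    by (cases i) (simp_all add: lin_ext_single smul_def fcounit_mult fcounit_scalar fcounit_basis
        bcp_counit_single zdelta_def)
qed (simp_all add: lin_ext_add fcounit_add bcp_counit_add)

section \<open>Coproduct\<close>

text \<open>Modulo the ideal, every tensor splits into four sectors according to the central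
  idempotents z_ad and its complement; on sector components the product is computed
  componentwise.\<close>

definition z_compl :: "gen free_alg" where "z_compl = 1 - z_ad"

definition sector :: "z2 \<Rightarrow> gen free_alg" where "sector s = (if s = Z0 then z_ad else z_compl)"

type_synonym sector_data = "z2 \<Rightarrow> z2 \<Rightarrow> gen free_alg \<times> gen free_alg"

definition sector_tensor :: "sector_data \<Rightarrow> gen free_alg2" where
  "sector_tensor F = (\<Sum>s\<in>{Z0, Z1}. \<Sum>t\<in>{Z0, Z1}. ftensor (sector s * fst (F s t)) (sector t * snd (F s t)))"

definition sector_mult :: "sector_data \<Rightarrow> sector_data \<Rightarrow> sector_data" where
  "sector_mult F G = (\<lambda>s t. (fst (F s t) * fst (G s t), snd (F s t) * snd (G s t)))"

definition sector_zpow :: "sector_data \<Rightarrow> sector_data \<Rightarrow> int \<Rightarrow> sector_data" where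
  "sector_zpow F G k = (\<lambda>s t. (zpow (fst (F s t)) (fst (G s t)) k, zpow (snd (F s t)) (snd (G s t)) k))"

definition sector_data :: "gen free_alg \<times> gen free_alg \<Rightarrow> gen free_alg \<times> gen free_alg \<Rightarrow>
    gen free_alg \<times> gen free_alg \<Rightarrow> gen free_alg \<times> gen free_alg \<Rightarrow> sector_data" where
  "sector_data a00 a01 a10 a11 s t =
     (if s = Z0 then (if t = Z0 then a00 else a01) else (if t = Z0 then a10 else a11))"

lemma sector_simps [simp]: "sector Z0 = z_ad" "sector Z1 = z_compl"
  by (simp_all add: sector_def)

lemma sector_tensor_expand: "sector_tensor F
   = ftensor (z_ad * fst (F Z0 Z0)) (z_ad * snd (F Z0 Z0)) + ftensor (z_ad * fst (F Z0 Z1)) (z_compl * snd (F Z0 Z1))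
   + (ftensor (z_compl * fst (F Z1 Z0)) (z_ad * snd (F Z1 Z0)) + ftensor (z_compl * fst (F Z1 Z1)) (z_compl * snd (F Z1 Z1)))"
  by (simp add: sector_tensor_def)

lemma sector_tensor_const: "sector_tensor (\<lambda>s t. (a, b)) = ftensor a b"
proof -
  have "sector_tensor (\<lambda>s t. (a, b)) = ftensor (z_ad * a + z_compl * a) (z_ad * b + z_compl * b)"
    by (simp add: sector_tensor_def ftensor_add_left ftensor_add_right algebra_simps)
  then show ?thesis by (simp add: z_compl_def algebra_simps)
qed

lemma sector_data_simps [simp]:
  "sector_data a00 a01 a10 a11 Z0 Z0 = a00" "sector_data a00 a01 a10 a11 Z0 Z1 = a01"
  "sector_data a00 a01 a10 a11 Z1 Z0 = a10" "sector_data a00 a01 a10 a11 Z1 Z1 = a11"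
  by (simp_all add: sector_data_def)

context dt_quotient
begin

lemma z_compl_central: "qcommute z_compl p 1"
  using qcommuteD[OF z_ad_central, of p]
  by (simp add: qcommute_def z_compl_def algebra_simps mod_eq_diff)

lemma sector_central: "sector s * p \<approx> p * sector s"
  using z_ad_central[of p] z_compl_central[of p] by (cases s) (simp_all add: qcommute_def)

lemma sector_orthogonal: "sector s * sector t \<approx> (if s = t then sector s else 0)"
proof -
  have "z_ad * z_compl = z_ad - z_ad * z_ad" "z_compl * z_ad = z_ad - z_ad * z_ad"
    by (simp_all add: z_compl_def algebra_simps)
  moreover have "z_ad - z_ad * z_ad \<approx> 0"
    using mod_eq_diff[OF mod_eq_refl z_ad_idem, of z_ad] by simp
  ultimately have "z_ad * z_compl \<approx> 0" "z_compl * z_ad \<approx> 0" by simp_all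
  moreover have "z_compl * z_compl = z_compl - z_ad * z_compl"
    by (simp add: z_compl_def algebra_simps)
  ultimately have "z_compl * z_compl \<approx> z_compl"
    using mod_eq_diff[OF mod_eq_refl, of "z_ad * z_compl" 0 z_compl] by simp
  then show ?thesis
    using \<open>z_ad * z_compl \<approx> 0\<close> \<open>z_compl * z_ad \<approx> 0\<close> by (cases s; cases t) (simp_all add: z_ad_idem)
qed

lemma sector_mult_sector: "(sector s * a) * (sector t * b) \<approx> (if s = t then sector s * (a * b) else 0)"
proof -
  have "(sector s * a) * (sector t * b) = sector s * ((a * sector t) * b)" by (simp add: mult.assoc)
  also have "\<dots> \<approx> sector s * ((sector t * a) * b)"
    by (intro mod_eq_mult_left mod_eq_mult_right mod_eq_sym[OF sector_central])
  also have "\<dots> = (sector s * sector t) * (a * b)" by (simp add: mult.assoc)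
  also have "\<dots> \<approx> (if s = t then sector s else 0) * (a * b)" by (intro mod_eq_mult_right sector_orthogonal)
  finally show ?thesis by (cases "s = t") simp_all
qed

lemma ftensor_sector_mult:
  "ftensor (sector s * a) (sector t * b) * ftensor (sector s' * a') (sector t' * b')
    \<simeq> (if s = s' \<and> t = t' then ftensor (sector s * (a * a')) (sector t * (b * b')) else 0)"
proof -
  have "ftensor (sector s * a) (sector t * b) * ftensor (sector s' * a') (sector t' * b')
      \<simeq> ftensor (if s = s' then sector s * (a * a') else 0) (if t = t' then sector t * (b * b') else 0)"
    unfolding ftensor_mult by (intro ftensor_mod_eq sector_mult_sector)
  then show ?thesis by (cases "s = s'"; cases "t = t'") simp_all
qed

lemma sector_tensor_mult: "sector_tensor F * sector_tensor G \<simeq> sector_tensor (sector_mult F G)"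
proof -
  define f where "f s t = ftensor (sector s * fst (F s t)) (sector t * snd (F s t))" for s t
  define g where "g s t = ftensor (sector s * fst (G s t)) (sector t * snd (G s t))" for s t
  define K where "K s t s' t' = ftensor (sector s * (fst (F s t) * fst (G s' t')))
      (sector t * (snd (F s t) * snd (G s' t')))" for s t s' t'
  have expand: "sector_tensor F * sector_tensor G
      = (\<Sum>s\<in>{Z0, Z1}. \<Sum>t\<in>{Z0, Z1}. \<Sum>s'\<in>{Z0, Z1}. \<Sum>t'\<in>{Z0, Z1}. f s t * g s' t')"
    unfolding sector_tensor_def f_def g_def
    by (subst sum_distrib_right, subst sum_distrib_right, subst sum_distrib_left, subst sum_distrib_left) (rule refl)
  have collapse: "(\<Sum>s\<in>{Z0, Z1}. \<Sum>t\<in>{Z0, Z1}. \<Sum>s'\<in>{Z0, Z1}. \<Sum>t'\<in>{Z0, Z1}. f s t * g s' t')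
      \<simeq> (\<Sum>s\<in>{Z0, Z1}. \<Sum>t\<in>{Z0, Z1}. \<Sum>s'\<in>{Z0, Z1}. \<Sum>t'\<in>{Z0, Z1}.
      if s = s' \<and> t = t' then K s t s' t' else 0)"
    unfolding f_def g_def K_def by (intro tensor_mod_eq_sum ftensor_sector_mult)
  have diagonal: "(\<Sum>s\<in>{Z0, Z1}. \<Sum>t\<in>{Z0, Z1}. \<Sum>s'\<in>{Z0, Z1}. \<Sum>t'\<in>{Z0, Z1}.
      if s = s' \<and> t = t' then K s t s' t' else 0) = sector_tensor (sector_mult F G)"
  proof -
    have "(\<Sum>s'\<in>{Z0, Z1}. \<Sum>t'\<in>{Z0, Z1}. if s = s' \<and> t = t' then K s t s' t' else 0) = K s t s t" for s t
      by (cases s; cases t) simp_all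
    then show ?thesis by (simp add: sector_tensor_def sector_mult_def K_def)
  qed
  show ?thesis using collapse unfolding expand diagonal .
qed

definition delta_sectors :: "gen free_alg \<Rightarrow> sector_data \<Rightarrow> bool" where
  "delta_sectors x F \<longleftrightarrow> fdelta delta_gen x \<simeq> sector_tensor F"

lemma delta_sectors_mult: "delta_sectors x F \<Longrightarrow> delta_sectors y G \<Longrightarrow> delta_sectors (x * y) (sector_mult F G)"
  unfolding delta_sectors_def fdelta_mult by (meson tensor_mod_eq_mult tensor_mod_eq_trans sector_tensor_mult)

lemma delta_sectors_power: "delta_sectors x F \<Longrightarrow> delta_sectors (x ^ n) (\<lambda>s t. (fst (F s t) ^ n, snd (F s t) ^ n))"
proof (induction n)
  case 0 then show ?case by (simp add: delta_sectors_def sector_tensor_const fdelta_one ftensor_one)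
next
  case (Suc n)
  then have "delta_sectors (x * x ^ n) (sector_mult F (\<lambda>s t. (fst (F s t) ^ n, snd (F s t) ^ n)))"
    by (intro delta_sectors_mult)
  then show ?case by (simp add: sector_mult_def)
qed

lemma delta_sectors_zpow:
  assumes "delta_sectors x F" "delta_sectors xi G"
  shows "delta_sectors (zpow x xi k) (sector_zpow F G k)"
proof (cases "0 \<le> k")
  case True
  then have "sector_zpow F G k = (\<lambda>s t. (fst (F s t) ^ nat k, snd (F s t) ^ nat k))"
    by (simp add: sector_zpow_def zpow_def)
  then show ?thesis using True delta_sectors_power[OF assms(1)] by (simp add: zpow_def)
next
  case False
  then have "sector_zpow F G k = (\<lambda>s t. (fst (G s t) ^ nat (- k), snd (G s t) ^ nat (- k)))"
    by (simp add: sector_zpow_def zpow_def)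
  then show ?thesis using False delta_sectors_power[OF assms(2)] by (simp add: zpow_def)
qed

lemma letters_in_corners: "A \<approx> z_ad * A" "D \<approx> z_ad * D" "B \<approx> z_compl * B" "C \<approx> z_compl * C"
proof -
  have "z_bc * A \<approx> 0" "z_bc * D \<approx> 0" "z_ad * B \<approx> 0" "z_ad * C \<approx> 0"
    using qcommuteD[OF z_bc_central, of A] qcommuteD[OF z_bc_central, of D]
      qcommuteD[OF z_ad_central, of B] qcommuteD[OF z_ad_central, of C] qcommute_off_corner
    by (simp_all add: qcommute_def mod_eq_trans)
  then show "A \<approx> z_ad * A" "D \<approx> z_ad * D" "B \<approx> z_compl * B" "C \<approx> z_compl * C"
    using mod_eq_diff[OF mod_eq_refl, of "z_ad * B" 0 B] mod_eq_diff[OF mod_eq_refl, of "z_ad * C" 0 C]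
    by (simp_all add: z_ad_absorb mod_eq_sym z_compl_def left_diff_distrib)
qed

lemma delta_sectors_letters:
  "delta_sectors A (sector_data (A, A) (0, 0) (0, 0) (B, C))"
  "delta_sectors D (sector_data (D, D) (0, 0) (0, 0) (C, B))"
  "delta_sectors B (sector_data (0, 0) (A, B) (B, D) (0, 0))"
  "delta_sectors C (sector_data (0, 0) (D, C) (C, A) (0, 0))"
  "delta_sectors Di (\<lambda>s t. (Di, Di))"
  unfolding delta_sectors_def sector_tensor_const
  by (simp_all add: sector_tensor_expand gA_def gB_def gC_def gD_def gDi_def fdelta_fgen
      add.commute[of "ftensor (fgen Gc) _"] tensor_mod_eq_add ftensor_mod_eq
      letters_in_corners[unfolded gA_def gB_def gC_def gD_def])

end

lemma bcp_delta_pm_sum: "bcp_delta x = pm_sum (\<lambda>a c. case a of (i, h) \<Rightarrow>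
     (\<Sum>i1\<in>{Z0, Z1}. \<Sum>i2\<in>{Z0, Z1}. \<Sum>e\<in>{Z0, Z1}. \<Sum>e'\<in>{Z0, Z1}.
        if z2_add i1 i2 = i then
          Poly_Mapping.single ((i1, lam e h), (e', h)) (c * (zdelta i2 e' * zdelta e e'))
        else 0)) x"
  by (simp add: bcp_delta_def pm_sum_def)

lemma bcp_delta_zero [simp]: "bcp_delta 0 = 0" and lin_ext2_zero [simp]: "lin_ext2 f 0 = 0"
  by (simp_all add: bcp_delta_def lin_ext2_def)

lemma bcp_delta_add: "bcp_delta (x + y) = bcp_delta x + bcp_delta y"
  unfolding bcp_delta_pm_sum
  by (rule pm_sum_add) (auto simp: distrib_right single_add sum.distrib split: prod.split)

lemma bcp_delta_single:
  "bcp_delta (Poly_Mapping.single (Z0, k, l) c) =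
     Poly_Mapping.single ((Z0, k, l), (Z0, k, l)) c + Poly_Mapping.single ((Z1, l, k), (Z1, k, l)) c"
  "bcp_delta (Poly_Mapping.single (Z1, k, l) c) =
     Poly_Mapping.single ((Z0, l, k), (Z1, k, l)) c + Poly_Mapping.single ((Z1, k, l), (Z0, k, l)) c"
  unfolding bcp_delta_pm_sum by (subst pm_sum_single, auto simp: zdelta_def)+

lemma lin_ext2_pm_sum:
  "lin_ext2 f t = pm_sum (\<lambda>a c. Poly_Mapping.single 0 c * ftensor (f (fst a)) (f (snd a))) t"
  by (simp add: lin_ext2_def pm_sum_def fmul2_eq_times zero_prod_def zero_list_def)

lemma lin_ext2_add: "lin_ext2 f (x + y) = lin_ext2 f x + lin_ext2 f y"
  unfolding lin_ext2_pm_sum by (rule pm_sum_add) (simp_all add: single_add distrib_right)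

lemma lin_ext2_single:
  "lin_ext2 f (Poly_Mapping.single a c) = Poly_Mapping.single 0 c * ftensor (f (fst a)) (f (snd a))"
  unfolding lin_ext2_pm_sum by (rule pm_sum_single) simp

lemma ftensor_smul: "ftensor (smul a x) (smul b y) = Poly_Mapping.single 0 (a * b) * ftensor x y"
  by (simp add: smul_def ftensor_scalar_left ftensor_scalar_right mult.assoc[symmetric] single_zero_mult
      mult.commute)

context dt_quotient
begin

lemma fdelta_basis0_sectors:
  "fdelta delta_gen (basis0 k l) \<simeq>
     ftensor (z_ad * (Di * (A * D) * (zpow A (Di * D) k * zpow D (Di * A) l)))
       (z_ad * (Di * (A * D) * (zpow A (Di * D) k * zpow D (Di * A) l)))
   + ftensor (z_compl * (Di * (B * C) * (zpow B (Di * C) k * zpow C (Di * B) l)))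
       (z_compl * (Di * (C * B) * (zpow C (Di * B) k * zpow B (Di * C) l)))"
proof -
  have "delta_sectors (basis0 k l)
     (sector_mult (sector_mult (\<lambda>s t. (Di, Di)) (sector_mult (sector_data (A, A) (0, 0) (0, 0) (B, C))
        (sector_data (D, D) (0, 0) (0, 0) (C, B))))
      (sector_mult (sector_zpow (sector_data (A, A) (0, 0) (0, 0) (B, C))
          (sector_mult (\<lambda>s t. (Di, Di)) (sector_data (D, D) (0, 0) (0, 0) (C, B))) k)
        (sector_zpow (sector_data (D, D) (0, 0) (0, 0) (C, B))
          (sector_mult (\<lambda>s t. (Di, Di)) (sector_data (A, A) (0, 0) (0, 0) (B, C))) l)))"
    unfolding basis0_def z_ad_def inv_a_def inv_d_def
    by (intro delta_sectors_mult delta_sectors_zpow delta_sectors_letters)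
  then show ?thesis
    unfolding delta_sectors_def sector_tensor_expand by (simp add: sector_mult_def sector_zpow_def)
qed

lemma fdelta_basis1_sectors:
  "fdelta delta_gen (basis1 k l) \<simeq>
     ftensor (z_ad * (Di * (A * D) * (zpow D (Di * A) k * zpow A (D * Di) l)))
       (z_compl * (Di * (B * C) * (zpow C (Di * B) k * zpow B (C * Di) l)))
   + ftensor (z_compl * (Di * (B * C) * (zpow C (Di * B) k * zpow B (C * Di) l)))
       (z_ad * (Di * (D * A) * (zpow A (Di * D) k * zpow D (A * Di) l)))"
proof -
  have "delta_sectors (basis1 k l)
     (sector_mult (sector_mult (\<lambda>s t. (Di, Di)) (sector_mult (sector_data (0, 0) (A, B) (B, D) (0, 0))
        (sector_data (0, 0) (D, C) (C, A) (0, 0))))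
      (sector_mult (sector_zpow (sector_data (0, 0) (D, C) (C, A) (0, 0))
          (sector_mult (\<lambda>s t. (Di, Di)) (sector_data (0, 0) (A, B) (B, D) (0, 0))) k)
        (sector_zpow (sector_data (0, 0) (A, B) (B, D) (0, 0))
          (sector_mult (sector_data (0, 0) (D, C) (C, A) (0, 0)) (\<lambda>s t. (Di, Di))) l)))"
    unfolding basis1_def z_bc_def inv_c_def inv_b_def
    by (intro delta_sectors_mult delta_sectors_zpow delta_sectors_letters)
  then show ?thesis
    unfolding delta_sectors_def sector_tensor_expand by (simp add: sector_mult_def sector_zpow_def)
qed

lemma z_compl_z_bc: "z_compl * (z_bc * r) \<approx> z_bc * r"
proof -
  have "z_compl * z_bc \<approx> z_bc"
    using mod_eq_diff[OF mod_eq_refl z_ad_z_bc, of z_bc] by (simp add: z_compl_def left_diff_distrib)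
  then show ?thesis using mod_eq_mult_right by (simp add: mult.assoc[symmetric])
qed

lemma z_ad_z_ad: "z_ad * (z_ad * r) \<approx> z_ad * r"
  using mod_eq_mult_right[OF z_ad_idem, of r] by (simp add: mult.assoc)

text \<open>The coproduct produces powers of D^{-1}c, which agrees with q^{-2} inv_b only up to the
  factor below for negative exponents.\<close>

definition inv_b_defect :: "int \<Rightarrow> complex" where
  "inv_b_defect k = (if k < 0 then (inverse (q^2)) ^ nat (- k) else 1)"

lemma zpow_B_DiC: "zpow B (Di * C) k \<approx> smul (inv_b_defect k) (zpow B inv_b k)"
  unfolding inv_b_defect_def inv_b_def by (rule zpow_mod_eq_smul[OF qcommuteD[OF qcommute_Di_C]])

lemma qcommute_zpow_b_zpow_c: "qcommute (zpow B inv_b k) (zpow C inv_c l) (((q^2) powi l) powi k)"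
  using qcommute_inv_b_zpow_c[of l] q_nonzero
  by (intro qcommute_zpow_left qcommute_B_zpow_c) (simp add: power_int_inverse)

lemma basis0_coproduct_sector1:
  "z_compl * (Di * (B * C) * (zpow B (Di * C) k * zpow C (Di * B) l))
     \<approx> smul (inv_b_defect k * ((q^2) powi l) powi k) (basis1 l k)"
  "z_compl * (Di * (C * B) * (zpow C (Di * B) k * zpow B (Di * C) l))
     \<approx> smul (inverse (q^2) * inv_b_defect l) (basis1 k l)"
proof -
  have "z_compl * (Di * (B * C) * (zpow B (Di * C) k * zpow C (Di * B) l))
      = z_compl * (z_bc * (zpow B (Di * C) k * zpow C inv_c l))"
    by (simp add: z_bc_def inv_c_def mult.assoc)
  also have "\<dots> \<approx> z_bc * (smul (inv_b_defect k) (zpow B inv_b k) * zpow C inv_c l)"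
    using z_compl_z_bc mod_eq_trans by (blast intro: mod_eq_mult_left mod_eq_mult_right zpow_B_DiC)
  also have "\<dots> \<approx> smul (inv_b_defect k) (z_bc * smul (((q^2) powi l) powi k) (zpow C inv_c l * zpow B inv_b k))"
    using mod_eq_smul[OF mod_eq_mult_left[OF qcommuteD[OF qcommute_zpow_b_zpow_c]]] by simp
  finally show "z_compl * (Di * (B * C) * (zpow B (Di * C) k * zpow C (Di * B) l))
     \<approx> smul (inv_b_defect k * ((q^2) powi l) powi k) (basis1 l k)"
    by (simp add: basis1_def)
  have DiCB: "Di * (C * B) \<approx> smul (inverse (q^2)) z_bc"
    using mod_eq_mult_left[OF qcommuteD[OF qcommute_C_B], of Di] by (simp add: z_bc_def)
  have "z_compl * (Di * (C * B) * (zpow C (Di * B) k * zpow B (Di * C) l))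
      \<approx> z_compl * (smul (inverse (q^2)) z_bc * (zpow C inv_c k * smul (inv_b_defect l) (zpow B inv_b l)))"
    unfolding inv_c_def by (intro mod_eq_mult_left mod_eq_mult DiCB zpow_B_DiC mod_eq_refl)
  also have "\<dots> = smul (inverse (q^2) * inv_b_defect l) (z_compl * (z_bc * (zpow C inv_c k * zpow B inv_b l)))"
    by (simp add: mult.assoc mult.commute)
  also have "\<dots> \<approx> smul (inverse (q^2) * inv_b_defect l) (basis1 k l)"
    unfolding basis1_def by (intro mod_eq_smul z_compl_z_bc)
  finally show "z_compl * (Di * (C * B) * (zpow C (Di * B) k * zpow B (Di * C) l))
     \<approx> smul (inverse (q^2) * inv_b_defect l) (basis1 k l)" .
qed

lemma basis0_coproduct_scale:
  "inv_b_defect k * ((q^2) powi l) powi k * (inverse (q^2) * inv_b_defect l)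
     = basis1_scale q l k * basis1_scale q k l"
proof -
  have defect: "inv_b_defect k = qmon (- 2 * max (- k) 0) 0" for k
  proof (cases "k < 0")
    case True
    then have "inv_b_defect k = (inverse (q^2)) powi (- k)" by (simp add: inv_b_defect_def power_int_def)
    then show ?thesis using True qmon_forms(5)[of "- k"] by simp
  qed (simp add: inv_b_defect_def qmon_def)
  have "((q^2) powi l) powi k = qmon (2 * l * k) 0"
    using qmon_forms(4)[of "l * k"] by (simp add: power_int_mult mult.assoc)
  moreover have "inverse (q^2) = qmon (-2) 0" using q_nonzero by (simp add: qmon_def power_int_minus)
  ultimately have "inv_b_defect k * ((q^2) powi l) powi k * (inverse (q^2) * inv_b_defect l)
      = qmon (- 2 * max (- k) 0 + 2 * l * k + (-2 + - 2 * max (- l) 0)) 0"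
    by (simp only: defect qmon_mult) simp
  also have "\<dots> = qmon (sigma_cochain l k + sigma_cochain k l + 2 * (- (1 + max (- k) 0 + max (- l) 0))) 0"
    using sigma_cochain_swap[of l k] by (intro qmon_cong) (simp_all add: algebra_simps)
  also have "\<dots> = qmon (sigma_cochain l k + sigma_cochain k l) (2 * (- (1 + max (- k) 0 + max (- l) 0)))"
    by (rule qmon_even[symmetric])
  also have "\<dots> = basis1_scale q l k * basis1_scale q k l"
    by (simp only: qmon_forms qmon_mult) (rule qmon_cong; simp)
  finally show ?thesis .
qed

lemma basis1_coproduct_sector0:
  "z_ad * (Di * (D * A) * (zpow A (Di * D) k * zpow D (A * Di) l)) \<approx> basis0 k l"
  "z_ad * (Di * (A * D) * (zpow D (Di * A) k * zpow A (D * Di) l)) \<approx> basis0 l k"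
proof -
  have "zpow D (A * Di) l \<approx> zpow D inv_d l"
    using zpow_mod_eq_smul[OF qcommuteD[OF qcommute_A_Di], of D l] by (simp add: inv_d_def cong: if_cong)
  moreover have "Di * (D * A) \<approx> z_ad"
    using mod_eq_mult_left[OF qcommuteD[OF qcommute_D_A], of Di] by (simp add: z_ad_def)
  ultimately have "z_ad * (Di * (D * A) * (zpow A (Di * D) k * zpow D (A * Di) l))
      \<approx> z_ad * (z_ad * (zpow A inv_a k * zpow D inv_d l))"
    unfolding inv_a_def by (intro mod_eq_mult_left mod_eq_mult mod_eq_refl)
  then show "z_ad * (Di * (D * A) * (zpow A (Di * D) k * zpow D (A * Di) l)) \<approx> basis0 k l"
    using z_ad_z_ad mod_eq_trans unfolding basis0_def by blast
  have "zpow A (D * Di) l \<approx> zpow A inv_a l"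
    using zpow_mod_eq_smul[OF qcommuteD[OF qcommute_D_Di], of A l] by (simp add: inv_a_def cong: if_cong)
  then have "z_ad * (Di * (A * D) * (zpow D (Di * A) k * zpow A (D * Di) l))
      \<approx> z_ad * (z_ad * (zpow D inv_d k * zpow A inv_a l))"
    unfolding inv_d_def z_ad_def by (intro mod_eq_mult_left mod_eq_mult mod_eq_refl)
  also have "\<dots> \<approx> z_ad * (zpow D inv_d k * zpow A inv_a l)" by (rule z_ad_z_ad)
  also have "\<dots> \<approx> basis0 l k"
    using qcommute_zpow_left[OF qcommute_D_zpow_a, of inv_d l k] qcommute_inv_d_zpow_a[of l]
    unfolding basis0_def by (simp add: mod_eq_mult_left qcommute_def)
  finally show "z_ad * (Di * (A * D) * (zpow D (Di * A) k * zpow A (D * Di) l)) \<approx> basis0 l k" .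
qed

lemma fdelta_basis0:
  "fdelta delta_gen (basis0 k l)
     \<simeq> ftensor (basis0 k l) (basis0 k l) + ftensor (dt_basis q (Z1, l, k)) (dt_basis q (Z1, k, l))"
proof -
  have basis: "Di * (A * D) * (zpow A (Di * D) k * zpow D (Di * A) l) = basis0 k l"
    by (simp add: basis0_def z_ad_def inv_a_def inv_d_def)
  have corner: "z_ad * basis0 k l \<approx> basis0 k l"
    unfolding basis0_def by (rule z_ad_z_ad)
  have sector0: "ftensor (z_ad * (Di * (A * D) * (zpow A (Di * D) k * zpow D (Di * A) l)))
      (z_ad * (Di * (A * D) * (zpow A (Di * D) k * zpow D (Di * A) l))) \<simeq> ftensor (basis0 k l) (basis0 k l)"
    unfolding basis by (intro ftensor_mod_eq corner)
  have sector1: "ftensor (z_compl * (Di * (B * C) * (zpow B (Di * C) k * zpow C (Di * B) l)))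
      (z_compl * (Di * (C * B) * (zpow C (Di * B) k * zpow B (Di * C) l)))
      \<simeq> ftensor (smul (inv_b_defect k * ((q^2) powi l) powi k) (basis1 l k))
          (smul (inverse (q^2) * inv_b_defect l) (basis1 k l))"
    by (intro ftensor_mod_eq basis0_coproduct_sector1)
  have "ftensor (smul (inv_b_defect k * ((q^2) powi l) powi k) (basis1 l k))
      (smul (inverse (q^2) * inv_b_defect l) (basis1 k l))
      = ftensor (dt_basis q (Z1, l, k)) (dt_basis q (Z1, k, l))"
    by (simp only: dt_basis_simps ftensor_smul basis0_coproduct_scale)
  then show ?thesis
    using tensor_mod_eq_trans[OF fdelta_basis0_sectors tensor_mod_eq_add[OF sector0 sector1]] by simp
qed

lemma fdelta_basis1:
  "fdelta delta_gen (basis1 k l) \<simeq> ftensor (basis0 l k) (basis1 k l) + ftensor (basis1 k l) (basis0 k l)"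
proof -
  have basis: "Di * (B * C) * (zpow C (Di * B) k * zpow B (C * Di) l) = basis1 k l"
    by (simp add: basis1_def z_bc_def inv_c_def inv_b_def)
  have corner: "z_compl * basis1 k l \<approx> basis1 k l"
    unfolding basis1_def by (rule z_compl_z_bc)
  have "ftensor (z_ad * (Di * (A * D) * (zpow D (Di * A) k * zpow A (D * Di) l)))
      (z_compl * (Di * (B * C) * (zpow C (Di * B) k * zpow B (C * Di) l))) \<simeq> ftensor (basis0 l k) (basis1 k l)"
    "ftensor (z_compl * (Di * (B * C) * (zpow C (Di * B) k * zpow B (C * Di) l)))
      (z_ad * (Di * (D * A) * (zpow A (Di * D) k * zpow D (A * Di) l))) \<simeq> ftensor (basis1 k l) (basis0 k l)"
    unfolding basis by (intro ftensor_mod_eq basis1_coproduct_sector0 corner)+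
  then show ?thesis
    using tensor_mod_eq_trans[OF fdelta_basis1_sectors tensor_mod_eq_add] by blast
qed

lemma fdelta_dt_basis:
  "fdelta delta_gen (dt_basis q (i, k, l)) \<simeq> lin_ext2 (dt_basis q) (bcp_delta (Poly_Mapping.single (i, k, l) 1))"
proof (cases i)
  case Z0
  then show ?thesis using fdelta_basis0 by (simp add: bcp_delta_single lin_ext2_add lin_ext2_single)
next
  case Z1
  let ?c = "basis1_scale q k l"
  have "fdelta delta_gen (smul ?c (basis1 k l))
      \<simeq> Poly_Mapping.single 0 ?c * (ftensor (basis0 l k) (basis1 k l) + ftensor (basis1 k l) (basis0 k l))"
    unfolding smul_def fdelta_scalar by (intro tensor_mod_eq_mult tensor_mod_eq_refl fdelta_basis1)
  also have "\<dots> = ftensor (basis0 l k) (smul ?c (basis1 k l)) + ftensor (smul ?c (basis1 k l)) (basis0 k l)"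
    using ftensor_smul[of 1 "basis0 l k" ?c] ftensor_smul[of ?c _ 1 "basis0 k l"] by (simp add: distrib_left)
  finally show ?thesis
    using Z1 by (simp add: bcp_delta_single lin_ext2_add lin_ext2_single)
qed

lemma fdelta_Phi: "fdelta delta_gen (Phi x) \<simeq> lin_ext2 (dt_basis q) (bcp_delta x)"
proof (induction x rule: poly_mapping_induct_triple)
  case (single i k l c)
  have "fdelta delta_gen (Phi (Poly_Mapping.single (i, k, l) c))
      = Poly_Mapping.single 0 c * fdelta delta_gen (dt_basis q (i, k, l))"
    by (simp add: lin_ext_single smul_def fdelta_scalar)
  also have "\<dots> \<simeq> Poly_Mapping.single 0 c * lin_ext2 (dt_basis q) (bcp_delta (Poly_Mapping.single (i, k, l) 1))"
    by (intro tensor_mod_eq_mult tensor_mod_eq_refl fdelta_dt_basis)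
  also have "\<dots> = lin_ext2 (dt_basis q) (bcp_delta (Poly_Mapping.single (i, k, l) c))"
    by (cases i) (simp_all add: bcp_delta_single lin_ext2_add lin_ext2_single distrib_left mult.assoc[symmetric] single_zero_mult)
  finally show ?case .
qed (simp_all add: lin_ext_add fdelta_add bcp_delta_add lin_ext2_add tensor_mod_eq_add)

end

lemma (in dt_quotient) hopf_iso_DT_dt_basis: "hopf_iso_DT q (dt_basis q)"
  unfolding hopf_iso_DT_def Let_def
  using Phi_surjective Phi_injective Phi_mult Phi_one fdelta_Phi fcounit_lin_ext_dt_basis
  by (auto simp: mod_eq_def tensor_mod_eq_def fmul_eq_times fscal_eq_single)

theorem proposition2p3:
  fixes q :: complex
  assumes "norm q = 1"
  shows "\<exists>f. hopf_iso_DT q f"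
proof -
  from assms have "q \<noteq> 0" by auto
  then interpret dt_quotient q by unfold_locales
  show ?thesis using hopf_iso_DT_dt_basis by blast
qed

end
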